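(* Consider a Pandora's box problem with sequential inspection. Let $(\mathcal{C},\mathcal{P},y)$ be any state in which stopping is not an optimal action, and suppose that some partially opened box $k\in\mathcal{P}$, with revealed type $t_k$, has conditional F-threshold $\sigma_k^{F\mid t_k}$ equal to the largest opening threshold in that state, i.e. $$\sigma_k^{F\mid t_k}=\max\Big\{\max_{j\in\mathcal{C}}\max\{\sigma_j^F,\sigma_j^P\},\ \max_{j\in\mathcal{P}}\sigma_j^{F\mid t_j}\Big\}.$$ Then there exists an optimal policy that F-opens box $k$ at that state.
   Context: Pandora's box problem with sequential inspection: there are $N$ independent boxes. Box $i$ has a type $T_i$ taking values in a finite set $\Gamma_i$ and a nonnegative prize $V_i$, with a known joint distribution of $(V_i,T_i)$; different boxes are independent. A closed box $i$ can be F-opened (fully opened) at cost $c_i^F$, which reveals $V_i$, or P-opened (partially opened) at cost $c_i^P$, which reveals only $T_i$; a partially opened box can later be F-opened at an additional cost $c_i^F$. At any time the decision maker may stop and collect the largest prize among the F-opened boxes (or the initial value $y$). The objective is to maximize the expected collected prize minus the total inspection costs. A state is $(\mathcal{C},\mathcal{P},y)$ where $\mathcal{C}$ is the set of closed boxes, $\mathcal{P}$ is the set of partially opened boxes together with their revealed types $t_j$, and $y$ is the largest prize found so far. Thresholds: $\sigma_i^F$ solves $\mathbb{E}[(V_i-\sigma)^+]=c_i^F$; the conditional F-threshold $\sigma_i^{F\mid t}$ solves $\mathbb{E}[(V_i-\sigma)^+\mid T_i=t]=c_i^F$; the P-threshold $\sigma_i^P$ solves $\mathbb{E}\big[\max\{0,-c_i^F+\mathbb{E}[(V_i-\sigma)^+\mid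 T_i]\}\big]=c_i^P$. The opening thresholds of a state are $\sigma_j^F,\sigma_j^P$ for closed boxes $j\in\mathcal{C}$ and $\sigma_j^{F\mid t_j}$ for partially opened boxes $j\in\mathcal{P}$. *)

theory Defs
  imports "HOL-Probability.Probability"
begin

text \<open>Box i has a joint law M i of (V_i, T_i) on real x 't, where the type set
  is a finite type 't (each Gamma_i is a subset of it). Costs cF i, cP i.\<close>

definition condE :: "(real \<times> 't) measure \<Rightarrow> 't \<Rightarrow> (real \<Rightarrow> real) \<Rightarrow> real" where
  "condE M t f =
     (\<integral>\<omega>. f (fst \<omega>) * indicator {\<omega>. snd \<omega> = t} \<omega> \<partial>M) / measure M {\<omega> \<in> space M. snd \<omega> = t}"

definition sigmaF :: "(real \<times> 't) measure \<Rightarrow> real \<Rightarrow> real" where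
  "sigmaF M c = (THE \<sigma>. (\<integral>\<omega>. max 0 (fst \<omega> - \<sigma>) \<partial>M) = c)"

definition sigmaFcond :: "(real \<times> 't) measure \<Rightarrow> real \<Rightarrow> 't \<Rightarrow> real" where
  "sigmaFcond M c t = (THE \<sigma>. condE M t (\<lambda>v. max 0 (v - \<sigma>)) = c)"

definition sigmaP :: "(real \<times> 't) measure \<Rightarrow> real \<Rightarrow> real \<Rightarrow> real" where
  "sigmaP M cF cP = (THE \<sigma>.
     (\<integral>\<omega>. max 0 (- cF + condE M (snd \<omega>) (\<lambda>v. max 0 (v - \<sigma>))) \<partial>M) = cP)"

text \<open>Finite-horizon value iteration with fuel n; with fuel at least
  2|C| + |P| it is the optimal value (extra fuel is harmless, since with no
  boxes left the only option is stopping).\<close>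

primrec W :: "(nat \<Rightarrow> (real \<times> 't) measure) \<Rightarrow> (nat \<Rightarrow> real) \<Rightarrow> (nat \<Rightarrow> real)
    \<Rightarrow> nat \<Rightarrow> nat set \<Rightarrow> (nat \<rightharpoonup> 't) \<Rightarrow> real \<Rightarrow> real" where
  "W M cF cP 0 C P y = y"
| "W M cF cP (Suc n) C P y = Max ({y}
     \<union> (\<lambda>j. - cF j + (\<integral>\<omega>. W M cF cP n (C - {j}) P (max y (fst \<omega>)) \<partial>M j)) ` C
     \<union> (\<lambda>j. - cP j + (\<integral>\<omega>. W M cF cP n (C - {j}) (P(j \<mapsto> snd \<omega>)) y \<partial>M j)) ` C
     \<union> (\<lambda>j. - cF j + condE (M j) (the (P j))
            (\<lambda>v. W M cF cP n C (P(j := None)) (max y v))) ` dom P)"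

definition optval :: "(nat \<Rightarrow> (real \<times> 't) measure) \<Rightarrow> (nat \<Rightarrow> real) \<Rightarrow> (nat \<Rightarrow> real)
    \<Rightarrow> nat set \<Rightarrow> (nat \<rightharpoonup> 't) \<Rightarrow> real \<Rightarrow> real" where
  "optval M cF cP C P y = W M cF cP (2 * card C + card (dom P)) C P y"

definition QFpartial :: "(nat \<Rightarrow> (real \<times> 't) measure) \<Rightarrow> (nat \<Rightarrow> real) \<Rightarrow> (nat \<Rightarrow> real)
    \<Rightarrow> nat set \<Rightarrow> (nat \<rightharpoonup> 't) \<Rightarrow> real \<Rightarrow> nat \<Rightarrow> real" where
  "QFpartial M cF cP C P y k =
     - cF k + condE (M k) (the (P k)) (\<lambda>v. optval M cF cP C (P(k := None)) (max y v))"

definition max_threshold :: "(nat \<Rightarrow> (real \<times> 't) measure) \<Rightarrow> (nat \<Rightarrow> real) \<Rightarrow> (nat \<Rightarrow> real)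
    \<Rightarrow> nat set \<Rightarrow> (nat \<rightharpoonup> 't) \<Rightarrow> real" where
  "max_threshold M cF cP C P = Max ((\<lambda>j. sigmaF (M j) (cF j)) ` C
      \<union> (\<lambda>j. sigmaP (M j) (cF j) (cP j)) ` C
      \<union> (\<lambda>j. sigmaFcond (M j) (cF j) (the (P j))) ` dom P)"

end

theory Submission
  imports Defs
begin

(*
  Let sigma be the conditional F-threshold of the partially opened box k, so that
  E[(V_k - sigma)^+ | t_k] = c^F_k, and compare with the problem in which box k is replaced by a
  prize min(V_k, sigma), drawn from the conditional law of V_k and obtained for free. The optimal
  value is nondecreasing with slope at most one in the current best prize, so F-opening k gains at
  most (V_k - sigma)^+ over the capped prize, and this excess costs exactly c^F_k in expectation.
  An induction over states (exchanging the expectation over box k with the expectation of each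
  option by Fubini) therefore gives
    V(C, P, y) <= E[V(C, P - k, max(y, min(V_k, sigma))) | t_k].
  Conversely, once the best prize reaches the largest opening threshold no option has positive net
  gain, so V(C, P - k, w) = w for w >= sigma. If y >= sigma the bound would make stopping optimal;
  hence y < sigma, and then the bound is exactly the value of F-opening k.
*)

lemma continuous_on_antitone_shift:
  fixes f :: "real \<Rightarrow> real"
  assumes anti: "\<And>x y. x \<le> y \<Longrightarrow> f y \<le> f x"
    and shift: "\<And>x y. x \<le> y \<Longrightarrow> f x \<le> f y + (y - x)"
  shows "continuous_on S f"
proof (rule lipschitz_on_continuous_on[of 1], rule lipschitz_onI)
  fix x y :: real
  show "dist (f x) (f y) \<le> 1 * dist x y"
    using anti[of x y] shift[of x y] anti[of y x] shift[of y x]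
    by (cases "x \<le> y") (auto simp: dist_real_def)
qed simp

lemma THE_level_of_decreasing:
  fixes f :: "real \<Rightarrow> real"
  assumes cont: "continuous_on UNIV f" and above: "c \<le> f a" and below: "f b \<le> c" and "0 < c"
    and strict: "\<And>x y. x < y \<Longrightarrow> 0 < f y \<Longrightarrow> f y < f x"
  shows "f (THE s. f s = c) = c"
proof (rule theI')
  have "\<exists>s. f s = c"
  proof (cases "a \<le> b")
    case True
    then show ?thesis using IVT2'[of f b c a] above below continuous_on_subset[OF cont] by blast
  next
    case False
    then show ?thesis using IVT'[of f b c a] above below continuous_on_subset[OF cont] by force
  qed
  moreover have "x = y" if "f x = c" "f y = c" for x y
    using strict[of x y] strict[of y x] that \<open>0 < c\<close> by (cases x y rule: linorder_cases) auto
  ultimately show "\<exists>!s. f s = c" by blast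
qed

section \<open>Functions of slope at most one and of linear growth\<close>

definition slope01 :: "(real \<Rightarrow> real) \<Rightarrow> bool" where
  "slope01 f \<longleftrightarrow> (\<forall>x y. x \<le> y \<longrightarrow> f x \<le> f y \<and> f y \<le> f x + (y - x))"

lemma slope01_mono: "slope01 f \<Longrightarrow> x \<le> y \<Longrightarrow> f x \<le> f y"
  and slope01_shift: "slope01 f \<Longrightarrow> x \<le> y \<Longrightarrow> f y \<le> f x + (y - x)"
  by (auto simp: slope01_def)

lemma slope01I:
  "(\<And>x y. x \<le> y \<Longrightarrow> f x \<le> f y) \<Longrightarrow> (\<And>x y. x \<le> y \<Longrightarrow> f y \<le> f x + (y - x)) \<Longrightarrow> slope01 f"
  by (auto simp: slope01_def)

lemma slope01_id: "slope01 (\<lambda>x. x)"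
  and slope01_max: "slope01 (\<lambda>x. max a x)"
  and slope01_min: "slope01 (\<lambda>x. min x b)"
  and slope01_excess: "slope01 (\<lambda>x. max 0 (x - s))"
  by (auto simp: slope01_def)

lemma slope01_add_const: "slope01 f \<Longrightarrow> slope01 (\<lambda>x. c + f x)"
  by (simp add: slope01_def)

lemma slope01_comp:
  assumes f: "slope01 f" and g: "slope01 g"
  shows "slope01 (\<lambda>x. f (g x))"
proof (rule slope01I)
  fix x y :: real
  assume "x \<le> y"
  then have "g x \<le> g y" "g y \<le> g x + (y - x)"
    using g by (auto simp: slope01_mono slope01_shift)
  then show "f (g x) \<le> f (g y)" "f (g y) \<le> f (g x) + (y - x)"
    using slope01_mono[OF f, of "g x" "g y"] slope01_shift[OF f, of "g x" "g y"] by linarith+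
qed

definition linear_growth :: "(real \<Rightarrow> real) \<Rightarrow> bool" where
  "linear_growth f \<longleftrightarrow> f \<in> borel_measurable borel \<and> (\<exists>K L. \<forall>x. \<bar>f x\<bar> \<le> K + L * \<bar>x\<bar>)"

lemma linear_growthI:
  "f \<in> borel_measurable borel \<Longrightarrow> (\<And>x. \<bar>f x\<bar> \<le> K + L * \<bar>x\<bar>) \<Longrightarrow> linear_growth f"
  by (auto simp: linear_growth_def)

lemma linear_growth_const: "linear_growth (\<lambda>_. c)"
  by (rule linear_growthI[where K="\<bar>c\<bar>" and L=0]) auto

lemma linear_growth_add:
  assumes "linear_growth f" "linear_growth g"
  shows "linear_growth (\<lambda>x. f x + g x)"
proof -
  obtain K L K' L' where f: "\<And>x. \<bar>f x\<bar> \<le> K + L * \<bar>x\<bar>" and g: "\<And>x. \<bar>g x\<bar> \<le> K' + L' * \<bar>x\<bar>"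
    using assms by (auto simp: linear_growth_def)
  have "\<bar>f x + g x\<bar> \<le> (K + K') + (L + L') * \<bar>x\<bar>" for x
    using abs_triangle_ineq[of "f x" "g x"] f[of x] g[of x] by (simp add: algebra_simps)
  with assms show ?thesis by (intro linear_growthI) (auto simp: linear_growth_def)
qed

lemma linear_growth_mult_const:
  assumes "linear_growth f"
  shows "linear_growth (\<lambda>x. f x * c)"
proof -
  obtain K L where "\<And>x. \<bar>f x\<bar> \<le> K + L * \<bar>x\<bar>"
    using assms by (auto simp: linear_growth_def)
  then have "\<bar>f x * c\<bar> \<le> K * \<bar>c\<bar> + L * \<bar>c\<bar> * \<bar>x\<bar>" for x
    using mult_right_mono[of "\<bar>f x\<bar>" "K + L * \<bar>x\<bar>" "\<bar>c\<bar>"] by (simp add: abs_mult algebra_simps)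
  with assms show ?thesis by (intro linear_growthI) (auto simp: linear_growth_def)
qed

lemma slope01_abs_le:
  assumes "slope01 f"
  shows "\<bar>f x\<bar> \<le> \<bar>f 0\<bar> + \<bar>x\<bar>"
  using slope01_mono[OF assms, of 0 x] slope01_shift[OF assms, of 0 x]
    slope01_mono[OF assms, of x 0] slope01_shift[OF assms, of x 0]
  by (cases "0 \<le> x") (simp_all add: abs_if)

lemma slope01_linear_growth:
  assumes "slope01 f"
  shows "linear_growth f"
proof (rule linear_growthI)
  show "f \<in> borel_measurable borel"
    using assms by (intro borel_measurable_mono) (auto simp: mono_def slope01_mono)
  show "\<bar>f x\<bar> \<le> \<bar>f 0\<bar> + 1 * \<bar>x\<bar>" for x
    using slope01_abs_le[OF assms] by simp
qed

definition linear_growth2 :: "(real \<Rightarrow> real \<Rightarrow> real) \<Rightarrow> bool" where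
  "linear_growth2 H \<longleftrightarrow> case_prod H \<in> borel_measurable (borel \<Otimes>\<^sub>M borel)
     \<and> (\<exists>K L. \<forall>x v. \<bar>H x v\<bar> \<le> K + L * (\<bar>x\<bar> + \<bar>v\<bar>))"

lemma linear_growth2_swap:
  assumes "linear_growth2 H"
  shows "linear_growth2 (\<lambda>v x. H x v)"
proof -
  obtain K L where [measurable]: "case_prod H \<in> borel_measurable (borel \<Otimes>\<^sub>M borel)"
    and bound: "\<And>x v. \<bar>H x v\<bar> \<le> K + L * (\<bar>x\<bar> + \<bar>v\<bar>)"
    using assms by (auto simp: linear_growth2_def)
  have "(\<lambda>p. case_prod H (snd p, fst p)) \<in> borel_measurable (borel \<Otimes>\<^sub>M borel)"
    by measurable
  then show ?thesis
    unfolding linear_growth2_def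
  proof (intro conjI exI allI)
    show "\<bar>H x v\<bar> \<le> K + L * (\<bar>v\<bar> + \<bar>x\<bar>)" for v x
      using bound[of x v] by (simp add: add.commute)
  qed (simp add: case_prod_beta')
qed

lemma linear_growth2_slice:
  assumes "linear_growth2 H"
  shows "linear_growth (H x)"
proof -
  obtain K L where [measurable]: "case_prod H \<in> borel_measurable (borel \<Otimes>\<^sub>M borel)"
    and bound: "\<And>x v. \<bar>H x v\<bar> \<le> K + L * (\<bar>x\<bar> + \<bar>v\<bar>)"
    using assms by (auto simp: linear_growth2_def)
  have "(\<lambda>v. case_prod H (x, v)) \<in> borel_measurable borel"
    by measurable
  moreover have "\<bar>H x v\<bar> \<le> (K + L * \<bar>x\<bar>) + L * \<bar>v\<bar>" for v
    using bound[of x v] by (simp add: algebra_simps)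
  ultimately show ?thesis by (intro linear_growthI) auto
qed

lemma linear_growth2_max:
  assumes G: "slope01 G" and g: "slope01 g"
  shows "linear_growth2 (\<lambda>x v. G (max (g v) x))"
proof -
  have [measurable]: "G \<in> borel_measurable borel" "g \<in> borel_measurable borel"
    using G g by (auto simp: linear_growth_def dest: slope01_linear_growth)
  have bound: "\<bar>G (max (g v) x)\<bar> \<le> (\<bar>G 0\<bar> + \<bar>g 0\<bar>) + (\<bar>x\<bar> + \<bar>v\<bar>)" for x v
  proof -
    have "\<bar>max (g v) x\<bar> \<le> \<bar>g v\<bar> + \<bar>x\<bar>" by (auto simp: max_def)
    then show ?thesis
      using slope01_abs_le[OF G, of "max (g v) x"] slope01_abs_le[OF g, of v] by linarith
  qed
  have "(\<lambda>p. G (max (g (snd p)) (fst p))) \<in> borel_measurable (borel \<Otimes>\<^sub>M borel)"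
    by measurable
  then show ?thesis
    unfolding linear_growth2_def
  proof (intro conjI exI allI)
    show "\<bar>G (max (g v) x)\<bar> \<le> (\<bar>G 0\<bar> + \<bar>g 0\<bar>) + 1 * (\<bar>x\<bar> + \<bar>v\<bar>)" for x v
      using bound by simp
  qed (simp add: case_prod_beta')
qed

section \<open>The joint law of prize and type of one box\<close>

definition type_prob :: "(real \<times> 't) measure \<Rightarrow> 't \<Rightarrow> real" where
  "type_prob A t = measure A {\<omega> \<in> space A. snd \<omega> = t}"

lemma type_prob_nonneg [simp]: "0 \<le> type_prob A t"
  by (simp add: type_prob_def)

definition prize_expect :: "(real \<times> 't) measure \<Rightarrow> ('t \<Rightarrow> real) \<Rightarrow> (real \<Rightarrow> real) \<Rightarrow> real" where
  "prize_expect A w f = (\<integral>\<omega>. f (fst \<omega>) * w (snd \<omega>) \<partial>A)"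

lemma condE_prize_expect: "condE A t f = prize_expect A (indicator {t}) f / type_prob A t"
  by (simp add: condE_def prize_expect_def type_prob_def indicator_def)

lemma prize_expect_one: "prize_expect A (\<lambda>_. 1) f = (\<integral>\<omega>. f (fst \<omega>) \<partial>A)"
  by (simp add: prize_expect_def)

locale box_law = prob_space A for A :: "(real \<times> 't::finite) measure" +
  assumes sets_eq: "sets A = sets (borel \<Otimes>\<^sub>M count_space UNIV)"
    and integrable_prize: "integrable A fst"
begin

lemma space_eq: "space A = UNIV"
  using sets_eq_imp_space_eq[OF sets_eq] by (simp add: space_pair_measure)

lemma fst_measurable [measurable]: "fst \<in> borel_measurable A"
  unfolding measurable_cong_sets[OF sets_eq refl] by measurable

lemma snd_measurable [measurable]: "snd \<in> measurable A (count_space UNIV)"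
  unfolding measurable_cong_sets[OF sets_eq refl] by measurable

lemma type_event [measurable]: "{\<omega>. snd \<omega> = t} \<in> sets A"
proof -
  have "{\<omega>. snd \<omega> = t} = snd -` {t} \<inter> space A" by (auto simp: space_eq)
  then show ?thesis using measurable_sets[OF snd_measurable] by simp
qed

lemma type_fun_measurable [measurable]: "(\<lambda>\<omega>. \<phi> (snd \<omega>) :: real) \<in> borel_measurable A"
  by (rule measurable_compose[OF snd_measurable]) simp

lemma integrable_type_fun: "integrable A (\<lambda>\<omega>. \<phi> (snd \<omega>) :: real)"
  by (rule integrable_const_bound[where B="\<Sum>t\<in>UNIV. \<bar>\<phi> t\<bar>"])
    (auto intro!: AE_I2 member_le_sum)

lemma integral_type_fun: "(\<integral>\<omega>. \<phi> (snd \<omega>) \<partial>A) = (\<Sum>t\<in>UNIV. \<phi> t * type_prob A t)"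
proof -
  have "(\<integral>\<omega>. \<phi> (snd \<omega>) \<partial>A) = (\<integral>\<omega>. (\<Sum>t\<in>UNIV. \<phi> t * indicator {\<omega>. snd \<omega> = t} \<omega>) \<partial>A)"
    by (simp add: indicator_def if_distrib)
  also have "\<dots> = (\<Sum>t\<in>UNIV. \<integral>\<omega>. \<phi> t * indicator {\<omega>. snd \<omega> = t} \<omega> \<partial>A)"
    by (intro Bochner_Integration.integral_sum integrable_mult_right integrable_real_indicator)
      (auto simp: less_top[symmetric])
  also have "\<dots> = (\<Sum>t\<in>UNIV. \<phi> t * type_prob A t)"
    by (simp add: type_prob_def space_eq)
  finally show ?thesis .
qed

lemma sum_type_prob: "(\<Sum>t\<in>UNIV. type_prob A t) = 1"
  using integral_type_fun[of "\<lambda>_. 1"] by (simp add: prob_space)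

lemma integrable_prize_fun:
  assumes "linear_growth f"
  shows "integrable A (\<lambda>\<omega>. f (fst \<omega>) * w (snd \<omega>))"
proof -
  obtain K L where f [measurable]: "f \<in> borel_measurable borel" and bound: "\<And>x. \<bar>f x\<bar> \<le> K + L * \<bar>x\<bar>"
    using assms by (auto simp: linear_growth_def)
  define B where "B = (\<Sum>t\<in>UNIV. \<bar>w t\<bar>)"
  have w_le: "\<bar>w t\<bar> \<le> B" for t unfolding B_def by (rule member_le_sum) auto
  have "0 \<le> B" unfolding B_def by (simp add: sum_nonneg)
  show ?thesis
  proof (rule Bochner_Integration.integrable_bound)
    show "integrable A (\<lambda>\<omega>. (\<bar>K\<bar> + \<bar>L\<bar> * \<bar>fst \<omega>\<bar>) * B)"
      using integrable_prize by auto
    show "AE \<omega> in A. norm (f (fst \<omega>) * w (snd \<omega>)) \<le> norm ((\<bar>K\<bar> + \<bar>L\<bar> * \<bar>fst \<omega>\<bar>) * B)"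
    proof (rule AE_I2)
      fix \<omega> :: "real \<times> 't"
      have "\<bar>f (fst \<omega>)\<bar> \<le> \<bar>K\<bar> + \<bar>L\<bar> * \<bar>fst \<omega>\<bar>"
        using bound[of "fst \<omega>"] abs_ge_self[of K] mult_right_mono[OF abs_ge_self[of L], of "\<bar>fst \<omega>\<bar>"]
        by linarith
      then have "\<bar>f (fst \<omega>)\<bar> * \<bar>w (snd \<omega>)\<bar> \<le> (\<bar>K\<bar> + \<bar>L\<bar> * \<bar>fst \<omega>\<bar>) * B"
        using w_le by (intro mult_mono) auto
      then show "norm (f (fst \<omega>) * w (snd \<omega>)) \<le> norm ((\<bar>K\<bar> + \<bar>L\<bar> * \<bar>fst \<omega>\<bar>) * B)"
        using \<open>0 \<le> B\<close> by (simp add: abs_mult)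
    qed
  qed measurable
qed

lemma integrable_prize_fun': "linear_growth f \<Longrightarrow> integrable A (\<lambda>\<omega>. f (fst \<omega>))"
  using integrable_prize_fun[of f "\<lambda>_. 1"] by simp

lemma prize_expect_mono:
  assumes "linear_growth f" "linear_growth g" "\<And>t. 0 \<le> w t" "\<And>x. f x \<le> g x"
  shows "prize_expect A w f \<le> prize_expect A w g"
  unfolding prize_expect_def using assms
  by (intro integral_mono integrable_prize_fun mult_right_mono) auto

lemma prize_expect_add:
  assumes "linear_growth f" "linear_growth g"
  shows "prize_expect A w (\<lambda>x. f x + g x) = prize_expect A w f + prize_expect A w g"
  unfolding prize_expect_def distrib_right
  using assms by (intro Bochner_Integration.integral_add integrable_prize_fun)

lemma prize_expect_mult_const: "prize_expect A w (\<lambda>x. f x * c) = prize_expect A w f * c"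
  by (simp add: prize_expect_def mult.commute mult.left_commute)

lemma prize_expect_sum:
  assumes "\<And>i. i \<in> I \<Longrightarrow> linear_growth (f i)"
  shows "prize_expect A w (\<lambda>x. \<Sum>i\<in>I. f i x) = (\<Sum>i\<in>I. prize_expect A w (f i))"
  unfolding prize_expect_def sum_distrib_right
  using assms by (intro Bochner_Integration.integral_sum integrable_prize_fun)

lemma prize_expect_const: "prize_expect A w (\<lambda>_. c) = c * (\<Sum>t\<in>UNIV. w t * type_prob A t)"
  using integral_type_fun[of "\<lambda>t. c * w t"]
  by (simp add: prize_expect_def sum_distrib_left mult.assoc)

lemma type_prob_prize_expect: "type_prob A t = prize_expect A (indicator {t}) (\<lambda>_. 1)"
  by (simp add: prize_expect_const indicator_def if_distrib)

lemma condE_mono: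
  "linear_growth f \<Longrightarrow> linear_growth g \<Longrightarrow> (\<And>x. f x \<le> g x) \<Longrightarrow> condE A t f \<le> condE A t g"
  unfolding condE_prize_expect by (intro divide_right_mono prize_expect_mono) auto

lemma condE_add:
  "linear_growth f \<Longrightarrow> linear_growth g \<Longrightarrow> condE A t (\<lambda>x. f x + g x) = condE A t f + condE A t g"
  unfolding condE_prize_expect by (simp add: prize_expect_add add_divide_distrib)

lemma condE_mult_const: "condE A t (\<lambda>x. f x * c) = condE A t f * c"
  unfolding condE_prize_expect by (simp add: prize_expect_mult_const)

lemma condE_sum:
  "(\<And>i. i \<in> I \<Longrightarrow> linear_growth (f i)) \<Longrightarrow> condE A t (\<lambda>x. \<Sum>i\<in>I. f i x) = (\<Sum>i\<in>I. condE A t (f i))"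
  unfolding condE_prize_expect by (simp add: prize_expect_sum sum_divide_distrib)

lemma condE_const: "0 < type_prob A t \<Longrightarrow> condE A t (\<lambda>_. c) = c"
  unfolding condE_prize_expect prize_expect_const by (simp add: indicator_def if_distrib)

lemma condE_const_add:
  "0 < type_prob A t \<Longrightarrow> linear_growth f \<Longrightarrow> condE A t (\<lambda>x. c + f x) = c + condE A t f"
  using condE_add[OF linear_growth_const] condE_const by simp

lemma condE_null: "type_prob A t = 0 \<Longrightarrow> condE A t f = 0"
  by (simp add: condE_prize_expect)

lemma linear_growth_prize_expect:
  assumes "linear_growth2 H"
  shows "linear_growth (\<lambda>x. prize_expect A w (H x))"
proof -
  obtain K L where H [measurable]: "case_prod H \<in> borel_measurable (borel \<Otimes>\<^sub>M borel)"
    and bound: "\<And>x v. \<bar>H x v\<bar> \<le> K + L * (\<bar>x\<bar> + \<bar>v\<bar>)"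
    using assms by (auto simp: linear_growth2_def)
  define W where "W = (\<Sum>t\<in>UNIV. \<bar>w t\<bar>)"
  have w_le: "\<bar>w t\<bar> \<le> W" for t unfolding W_def by (rule member_le_sum) auto
  have "(\<lambda>p. case_prod H (fst p, fst (snd p)) * w (snd (snd p))) \<in> borel_measurable (borel \<Otimes>\<^sub>M A)"
    by measurable
  then have "(\<lambda>x. prize_expect A w (H x)) \<in> borel_measurable borel"
    unfolding prize_expect_def by (intro borel_measurable_lebesgue_integral) (simp add: case_prod_beta')
  moreover have "\<bar>prize_expect A w (H x)\<bar> \<le> W * (\<bar>K\<bar> + \<bar>L\<bar> * (\<integral>\<omega>. \<bar>fst \<omega>\<bar> \<partial>A)) + (W * \<bar>L\<bar>) * \<bar>x\<bar>" for x
  proof -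
    have "\<bar>prize_expect A w (H x)\<bar> \<le> (\<integral>\<omega>. \<bar>H x (fst \<omega>) * w (snd \<omega>)\<bar> \<partial>A)"
      unfolding prize_expect_def using integral_norm_bound[of A "\<lambda>\<omega>. H x (fst \<omega>) * w (snd \<omega>)"] by simp
    also have "\<dots> \<le> (\<integral>\<omega>. W * (\<bar>K\<bar> + \<bar>L\<bar> * \<bar>x\<bar> + \<bar>L\<bar> * \<bar>fst \<omega>\<bar>) \<partial>A)"
    proof (rule integral_mono)
      show "integrable A (\<lambda>\<omega>. \<bar>H x (fst \<omega>) * w (snd \<omega>)\<bar>)"
        using integrable_prize_fun[OF linear_growth2_slice[OF assms]] by auto
      show "integrable A (\<lambda>\<omega>. W * (\<bar>K\<bar> + \<bar>L\<bar> * \<bar>x\<bar> + \<bar>L\<bar> * \<bar>fst \<omega>\<bar>))"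
        using integrable_prize by auto
      fix \<omega> :: "real \<times> 't"
      have "\<bar>H x (fst \<omega>)\<bar> \<le> \<bar>K\<bar> + \<bar>L\<bar> * \<bar>x\<bar> + \<bar>L\<bar> * \<bar>fst \<omega>\<bar>"
        using bound[of x "fst \<omega>"] abs_ge_self[of K]
          mult_right_mono[OF abs_ge_self[of L], of "\<bar>x\<bar> + \<bar>fst \<omega>\<bar>"]
        by (simp add: distrib_left)
      then show "\<bar>H x (fst \<omega>) * w (snd \<omega>)\<bar> \<le> W * (\<bar>K\<bar> + \<bar>L\<bar> * \<bar>x\<bar> + \<bar>L\<bar> * \<bar>fst \<omega>\<bar>)"
        using w_le[of "snd \<omega>"] by (simp add: abs_mult mult.commute mult_mono)
    qed
    also have "\<dots> = W * (\<bar>K\<bar> + \<bar>L\<bar> * (\<integral>\<omega>. \<bar>fst \<omega>\<bar> \<partial>A)) + (W * \<bar>L\<bar>) * \<bar>x\<bar>"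
      using integrable_prize by (simp add: prob_space algebra_simps)
    finally show ?thesis .
  qed
  ultimately show ?thesis by (rule linear_growthI)
qed

lemma linear_growth_condE:
  "linear_growth2 H \<Longrightarrow> linear_growth (\<lambda>x. condE A t (H x))"
  unfolding condE_prize_expect divide_inverse
  by (intro linear_growth_mult_const linear_growth_prize_expect)

lemma prize_expect_max_mono:
  assumes "slope01 G" "\<And>t. 0 \<le> w t" "x \<le> y"
  shows "prize_expect A w (\<lambda>v. G (max x v)) \<le> prize_expect A w (\<lambda>v. G (max y v))"
proof -
  have "G (max x v) \<le> G (max y v)" for v
    using assms(3) by (intro slope01_mono[OF assms(1)] max.mono) auto
  then show ?thesis
    by (intro prize_expect_mono slope01_linear_growth slope01_comp[OF assms(1) slope01_max] assms(2))
qed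

lemma prize_expect_max_shift:
  assumes G: "slope01 G" and "\<And>t. 0 \<le> w t" "x \<le> y"
  shows "prize_expect A w (\<lambda>v. G (max y v))
    \<le> prize_expect A w (\<lambda>v. G (max x v)) + (y - x) * prize_expect A w (\<lambda>_. 1)"
proof -
  have lg: "linear_growth (\<lambda>v. G (max x v))" for x
    by (intro slope01_linear_growth slope01_comp[OF G slope01_max])
  have "G (max y v) \<le> G (max x v) + (y - x)" for v
  proof -
    have "max x v \<le> max y v" "max y v - max x v \<le> y - x"
      using \<open>x \<le> y\<close> by (auto simp: max_def)
    then show ?thesis using slope01_shift[OF G, of "max x v" "max y v"] by linarith
  qed
  then have "prize_expect A w (\<lambda>v. G (max y v)) \<le> prize_expect A w (\<lambda>v. G (max x v) + (y - x))"
    using assms by (intro prize_expect_mono lg linear_growth_add linear_growth_const) auto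
  also have "\<dots> = prize_expect A w (\<lambda>v. G (max x v)) + (y - x) * prize_expect A w (\<lambda>_. 1)"
    by (simp add: prize_expect_add lg linear_growth_const prize_expect_const)
  finally show ?thesis .
qed

lemma integral_max_slope01:
  assumes "slope01 G"
  shows "slope01 (\<lambda>z. \<integral>\<omega>. G (max z (fst \<omega>)) \<partial>A)"
  using prize_expect_max_mono[OF assms, of "\<lambda>_. 1"] prize_expect_max_shift[OF assms, of "\<lambda>_. 1"]
  by (intro slope01I) (auto simp: prize_expect_one prob_space)

lemma condE_max_slope01:
  assumes "slope01 G"
  shows "slope01 (\<lambda>z. condE A t (\<lambda>v. G (max z v)))"
proof (cases "type_prob A t = 0")
  case True
  then show ?thesis by (simp add: condE_null slope01_def)
next
  case False
  then have p: "0 < type_prob A t" using type_prob_nonneg[of A t] by linarith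
  show ?thesis
  proof (rule slope01I)
    fix x y :: real
    assume "x \<le> y"
    show "condE A t (\<lambda>v. G (max x v)) \<le> condE A t (\<lambda>v. G (max y v))"
      unfolding condE_prize_expect using \<open>x \<le> y\<close>
      by (intro divide_right_mono prize_expect_max_mono[OF assms]) auto
    have "prize_expect A (indicator {t}) (\<lambda>v. G (max y v))
        \<le> prize_expect A (indicator {t}) (\<lambda>v. G (max x v)) + (y - x) * type_prob A t"
      using prize_expect_max_shift[OF assms, of "indicator {t}"] \<open>x \<le> y\<close>
      by (simp add: type_prob_prize_expect)
    then show "condE A t (\<lambda>v. G (max y v)) \<le> condE A t (\<lambda>v. G (max x v)) + (y - x)"
      unfolding condE_prize_expect using p by (simp add: divide_simps)
  qed
qed

lemma integral_type_slope01:
  assumes "\<And>t. slope01 (G t)"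
  shows "slope01 (\<lambda>z. \<integral>\<omega>. G (snd \<omega>) z \<partial>A)"
proof (rule slope01I)
  fix x y :: real
  assume "x \<le> y"
  show "(\<integral>\<omega>. G (snd \<omega>) x \<partial>A) \<le> (\<integral>\<omega>. G (snd \<omega>) y \<partial>A)"
    unfolding integral_type_fun[of "\<lambda>t. G t x"] integral_type_fun[of "\<lambda>t. G t y"]
    using \<open>x \<le> y\<close> by (intro sum_mono mult_right_mono slope01_mono[OF assms]) auto
  have "(\<Sum>t\<in>UNIV. G t y * type_prob A t) \<le> (\<Sum>t\<in>UNIV. (G t x + (y - x)) * type_prob A t)"
    using \<open>x \<le> y\<close> by (intro sum_mono mult_right_mono slope01_shift[OF assms]) auto
  also have "\<dots> = (\<Sum>t\<in>UNIV. G t x * type_prob A t) + (y - x)"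
    by (simp add: distrib_right sum.distrib sum_distrib_left[symmetric] sum_type_prob)
  finally show "(\<integral>\<omega>. G (snd \<omega>) y \<partial>A) \<le> (\<integral>\<omega>. G (snd \<omega>) x \<partial>A) + (y - x)"
    unfolding integral_type_fun[of "\<lambda>t. G t x"] integral_type_fun[of "\<lambda>t. G t y"] .
qed

section \<open>Reservation thresholds\<close>

definition mean_excess :: "('t \<Rightarrow> real) \<Rightarrow> real \<Rightarrow> real" where
  "mean_excess w s = prize_expect A w (\<lambda>v. max 0 (v - s)) / prize_expect A w (\<lambda>_. 1)"

lemma condE_excess: "condE A t (\<lambda>v. max 0 (v - s)) = mean_excess (indicator {t}) s"
  by (simp add: mean_excess_def condE_prize_expect prize_expect_const indicator_def if_distrib)

lemma integral_excess: "(\<integral>\<omega>. max 0 (fst \<omega> - s) \<partial>A) = mean_excess (\<lambda>_. 1) s"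
  by (simp add: mean_excess_def prize_expect_one prob_space)

context
  fixes w :: "'t \<Rightarrow> real"
  assumes w_nonneg: "\<And>t. 0 \<le> w t"
begin

lemma prize_expect_one_nonneg: "0 \<le> prize_expect A w (\<lambda>_. 1)"
  by (simp add: prize_expect_const sum_nonneg w_nonneg)

lemma mean_excess_antimono: "s \<le> s' \<Longrightarrow> mean_excess w s' \<le> mean_excess w s"
  unfolding mean_excess_def using prize_expect_one_nonneg
  by (intro divide_right_mono prize_expect_mono slope01_linear_growth slope01_excess w_nonneg) auto

lemma mean_excess_shift: "s \<le> s' \<Longrightarrow> mean_excess w s \<le> mean_excess w s' + (s' - s)"
proof -
  assume "s \<le> s'"
  let ?m = "prize_expect A w (\<lambda>_. 1)"
  have "prize_expect A w (\<lambda>v. max 0 (v - s)) \<le> prize_expect A w (\<lambda>v. max 0 (v - s') + (s' - s))"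
    using \<open>s \<le> s'\<close>
    by (intro prize_expect_mono slope01_linear_growth slope01_excess linear_growth_add
        linear_growth_const w_nonneg) auto
  also have "\<dots> = prize_expect A w (\<lambda>v. max 0 (v - s')) + (s' - s) * ?m"
    by (simp add: prize_expect_add slope01_linear_growth[OF slope01_excess] linear_growth_const
        prize_expect_const)
  finally show ?thesis
    using prize_expect_one_nonneg \<open>s \<le> s'\<close>
    by (cases "?m = 0") (simp_all add: mean_excess_def field_simps)
qed

lemma mean_excess_ge:
  assumes "0 < prize_expect A w (\<lambda>_. 1)"
  shows "prize_expect A w (\<lambda>v. v) / prize_expect A w (\<lambda>_. 1) - s \<le> mean_excess w s"
proof -
  let ?m = "prize_expect A w (\<lambda>_. 1)"
  have "prize_expect A w (\<lambda>v. v + - s) \<le> prize_expect A w (\<lambda>v. max 0 (v - s))"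
    by (intro prize_expect_mono linear_growth_add slope01_linear_growth[OF slope01_id]
        slope01_linear_growth[OF slope01_excess] linear_growth_const w_nonneg) auto
  moreover have "prize_expect A w (\<lambda>v. v + - s) = prize_expect A w (\<lambda>v. v) - s * ?m"
    by (subst prize_expect_add) (auto intro: slope01_linear_growth slope01_id linear_growth_const
        simp: prize_expect_const)
  ultimately have "(prize_expect A w (\<lambda>v. v) - s * ?m) / ?m \<le> prize_expect A w (\<lambda>v. max 0 (v - s)) / ?m"
    using assms by (intro divide_right_mono) auto
  then show ?thesis
    using assms by (simp add: mean_excess_def diff_divide_distrib)
qed

lemma mean_excess_tendsto: "(mean_excess w \<longlongrightarrow> 0) at_top"
proof -
  define B where "B = (\<Sum>t\<in>UNIV. w t)"
  have w_le: "w t \<le> B" for t unfolding B_def by (rule member_le_sum) (auto simp: w_nonneg)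
  have "((\<lambda>s. \<integral>\<omega>. max 0 (fst \<omega> - s) * w (snd \<omega>) \<partial>A) \<longlongrightarrow> (\<integral>\<omega>. 0 \<partial>A)) at_top"
  proof (rule integral_dominated_convergence_at_top[where w="\<lambda>\<omega>. \<bar>fst \<omega>\<bar> * B"])
    show "AE \<omega> in A. ((\<lambda>s. max 0 (fst \<omega> - s) * w (snd \<omega>)) \<longlongrightarrow> 0) at_top"
    proof (rule AE_I2, rule tendsto_eventually)
      fix \<omega> :: "real \<times> 't"
      show "\<forall>\<^sub>F s in at_top. max 0 (fst \<omega> - s) * w (snd \<omega>) = 0"
        using eventually_gt_at_top[of "fst \<omega>"] by eventually_elim simp
    qed
    show "\<forall>\<^sub>F s in at_top. AE \<omega> in A. norm (max 0 (fst \<omega> - s) * w (snd \<omega>)) \<le> \<bar>fst \<omega>\<bar> * B"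
      using eventually_ge_at_top[of "0::real"]
    proof eventually_elim
      case (elim s)
      show ?case
      proof (rule AE_I2)
        fix \<omega> :: "real \<times> 't"
        have "max 0 (fst \<omega> - s) * w (snd \<omega>) \<le> \<bar>fst \<omega>\<bar> * B"
          using elim w_le[of "snd \<omega>"] w_nonneg[of "snd \<omega>"] by (intro mult_mono) auto
        then show "norm (max 0 (fst \<omega> - s) * w (snd \<omega>)) \<le> \<bar>fst \<omega>\<bar> * B"
          using w_nonneg[of "snd \<omega>"] by simp
      qed
    qed
  qed (use integrable_prize in auto)
  then have "((\<lambda>s. prize_expect A w (\<lambda>v. max 0 (v - s))) \<longlongrightarrow> 0) at_top"
    by (simp add: prize_expect_def)
  then show ?thesis
    unfolding mean_excess_def by (auto intro: tendsto_divide_zero)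
qed

lemma mean_excess_strict_antimono:
  assumes "s < s'" and pos: "0 < mean_excess w s'"
  shows "mean_excess w s' < mean_excess w s"
proof -
  let ?f = "\<lambda>s \<omega>. max 0 (fst \<omega> - s) * w (snd \<omega>)"
  let ?D = "\<lambda>\<omega>. ?f s \<omega> - ?f s' \<omega>"
  have int: "integrable A (?f r)" for r
    by (rule integrable_prize_fun[OF slope01_linear_growth[OF slope01_excess]])
  have D_nonneg: "0 \<le> ?D \<omega>" for \<omega>
    using \<open>s < s'\<close> w_nonneg[of "snd \<omega>"] by (intro diff_ge_0_iff_ge[THEN iffD2] mult_right_mono) auto
  have D_zero: "?f s' \<omega> = 0" if "?D \<omega> = 0" for \<omega>
    using that \<open>s < s'\<close> by (cases "fst \<omega> \<le> s'") (auto simp: max_def algebra_simps)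
  have m: "0 < prize_expect A w (\<lambda>_. 1)"
    using pos prize_expect_one_nonneg by (cases "prize_expect A w (\<lambda>_. 1) = 0") (auto simp: mean_excess_def)
  have "prize_expect A w (\<lambda>v. max 0 (v - s')) < prize_expect A w (\<lambda>v. max 0 (v - s))"
  proof (rule ccontr)
    assume "\<not> ?thesis"
    then have "integral\<^sup>L A ?D \<le> 0"
      using int by (simp add: prize_expect_def Bochner_Integration.integral_diff)
    moreover have "0 \<le> integral\<^sup>L A ?D" using D_nonneg by simp
    ultimately have "integral\<^sup>L A ?D = 0" by simp
    then have "AE \<omega> in A. ?D \<omega> = 0"
      using integral_nonneg_eq_0_iff_AE[of A ?D] int D_nonneg by auto
    then have "AE \<omega> in A. ?f s' \<omega> = 0" by (rule eventually_mono) (rule D_zero)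
    then have "prize_expect A w (\<lambda>v. max 0 (v - s')) = 0"
      unfolding prize_expect_def by (rule integral_eq_zero_AE)
    then show False using pos by (simp add: mean_excess_def)
  qed
  then show ?thesis using m by (simp add: mean_excess_def divide_strict_right_mono)
qed

lemma mean_excess_level:
  assumes "0 < c" and m: "0 < prize_expect A w (\<lambda>_. 1)"
  shows "mean_excess w (THE s. mean_excess w s = c) = c"
proof -
  obtain b where "mean_excess w b < c"
    using order_tendstoD(2)[OF mean_excess_tendsto \<open>0 < c\<close>] by (auto simp: eventually_at_top_linorder)
  then show ?thesis
  proof (intro THE_level_of_decreasing[where b=b])
    let ?a = "prize_expect A w (\<lambda>v. v) / prize_expect A w (\<lambda>_. 1) - c"
    show "continuous_on UNIV (mean_excess w)"
      by (intro continuous_on_antitone_shift mean_excess_antimono mean_excess_shift)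
    show "c \<le> mean_excess w ?a"
      using mean_excess_ge[OF m, of ?a] by simp
    show "mean_excess w y < mean_excess w x" if "x < y" "0 < mean_excess w y" for x y
      using mean_excess_strict_antimono[OF that] .
  qed (use \<open>0 < c\<close> in auto)
qed

end

lemma sigmaF_eq: "0 < c \<Longrightarrow> (\<integral>\<omega>. max 0 (fst \<omega> - sigmaF A c) \<partial>A) = c"
  using mean_excess_level[of "\<lambda>_. 1" c]
  by (simp add: sigmaF_def integral_excess prize_expect_const sum_type_prob)

lemma sigmaFcond_eq:
  "0 < c \<Longrightarrow> 0 < type_prob A t \<Longrightarrow> condE A t (\<lambda>v. max 0 (v - sigmaFcond A c t)) = c"
  using mean_excess_level[of "indicator {t}" c]
  by (simp add: sigmaFcond_def condE_excess type_prob_prize_expect)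

definition partial_gain :: "real \<Rightarrow> real \<Rightarrow> real" where
  "partial_gain c s = (\<integral>\<omega>. max 0 (- c + condE A (snd \<omega>) (\<lambda>v. max 0 (v - s))) \<partial>A)"

lemma partial_gain_sum:
  "partial_gain c s = (\<Sum>t\<in>UNIV. max 0 (- c + mean_excess (indicator {t}) s) * type_prob A t)"
  unfolding partial_gain_def condE_excess by (rule integral_type_fun)

lemma partial_gain_antimono: "s \<le> s' \<Longrightarrow> partial_gain c s' \<le> partial_gain c s"
  unfolding partial_gain_sum
  by (intro sum_mono mult_right_mono type_prob_nonneg max.mono add_left_mono mean_excess_antimono) auto

lemma partial_gain_shift: "s \<le> s' \<Longrightarrow> partial_gain c s \<le> partial_gain c s' + (s' - s)"
proof -
  assume "s \<le> s'"
  have "max 0 (- c + mean_excess (indicator {t}) s) * type_prob A t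
      \<le> (max 0 (- c + mean_excess (indicator {t}) s') + (s' - s)) * type_prob A t" for t
    using mean_excess_shift[of "indicator {t}" s s'] \<open>s \<le> s'\<close>
    by (intro mult_right_mono) auto
  then have "partial_gain c s \<le> (\<Sum>t\<in>UNIV. (max 0 (- c + mean_excess (indicator {t}) s') + (s' - s)) * type_prob A t)"
    unfolding partial_gain_sum by (rule sum_mono)
  also have "\<dots> = partial_gain c s' + (s' - s)"
    by (simp add: partial_gain_sum distrib_right sum.distrib sum_distrib_left[symmetric] sum_type_prob)
  finally show ?thesis .
qed

lemma partial_gain_strict_antimono:
  assumes "0 < c" "s < s'" "0 < partial_gain c s'"
  shows "partial_gain c s' < partial_gain c s"
proof -
  let ?e = "\<lambda>t. mean_excess (indicator {t}) :: real \<Rightarrow> real"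
  have "\<exists>t. 0 < max 0 (- c + ?e t s') * type_prob A t"
  proof (rule ccontr)
    assume "\<nexists>t. 0 < max 0 (- c + ?e t s') * type_prob A t"
    then have "partial_gain c s' \<le> 0"
      unfolding partial_gain_sum by (intro sum_nonpos) (simp add: not_less)
    then show False using assms(3) by simp
  qed
  then obtain t where t: "0 < max 0 (- c + ?e t s') * type_prob A t" ..
  then have "0 < type_prob A t" "c < ?e t s'"
    by (auto simp: zero_less_mult_iff)
  moreover have "?e t s' < ?e t s"
    using \<open>c < ?e t s'\<close> assms by (intro mean_excess_strict_antimono) auto
  ultimately have "max 0 (- c + ?e t s') * type_prob A t < max 0 (- c + ?e t s) * type_prob A t"
    by (intro mult_strict_right_mono) auto
  moreover have "max 0 (- c + ?e u s') * type_prob A u \<le> max 0 (- c + ?e u s) * type_prob A u" for u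
    using assms by (intro mult_right_mono max.mono add_left_mono mean_excess_antimono) auto
  ultimately show ?thesis
    unfolding partial_gain_sum by (intro sum_strict_mono_ex1) auto
qed

lemma sigmaP_eq:
  assumes "0 < cF" "0 < cP"
  shows "(\<integral>\<omega>. max 0 (- cF + condE A (snd \<omega>) (\<lambda>v. max 0 (v - sigmaP A cF cP))) \<partial>A) = cP"
proof -
  let ?e = "\<lambda>t. mean_excess (indicator {t}) :: real \<Rightarrow> real"
  have "\<exists>t. 0 < type_prob A t"
  proof (rule ccontr)
    assume "\<nexists>t. 0 < type_prob A t"
    then have "(\<Sum>t\<in>UNIV. type_prob A t) \<le> 0" by (intro sum_nonpos) (simp add: not_less)
    then show False using sum_type_prob by simp
  qed
  then obtain t0 where p0: "0 < type_prob A t0" ..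
  define a where "a = prize_expect A (indicator {t0}) (\<lambda>v. v) / type_prob A t0 - cF - cP / type_prob A t0"
  have "cF + cP / type_prob A t0 \<le> ?e t0 a"
    using mean_excess_ge[of "indicator {t0}" a] p0 by (simp add: a_def type_prob_prize_expect[symmetric])
  then have "cP \<le> (- cF + ?e t0 a) * type_prob A t0"
    using p0 by (simp add: field_simps)
  also have "\<dots> \<le> max 0 (- cF + ?e t0 a) * type_prob A t0"
    by (intro mult_right_mono) auto
  also have "\<dots> \<le> partial_gain cF a"
    unfolding partial_gain_sum by (rule member_le_sum) auto
  finally have above: "cP \<le> partial_gain cF a" .
  have "\<forall>\<^sub>F s in at_top. \<forall>t. ?e t s < cF"
    using order_tendstoD(2)[OF mean_excess_tendsto \<open>0 < cF\<close>, of "indicator {_}"]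
    by (simp add: eventually_all_finite)
  then obtain b where "\<And>t. ?e t b < cF"
    by (auto simp: eventually_at_top_linorder)
  then have below: "partial_gain cF b \<le> cP"
    using \<open>0 < cP\<close> by (simp add: partial_gain_sum)
  have "partial_gain cF (THE s. partial_gain cF s = cP) = cP"
  proof (rule THE_level_of_decreasing[where f="partial_gain cF", OF _ above below \<open>0 < cP\<close>])
    show "continuous_on UNIV (partial_gain cF)"
      by (intro continuous_on_antitone_shift partial_gain_antimono partial_gain_shift)
    show "partial_gain cF y < partial_gain cF x" if "x < y" "0 < partial_gain cF y" for x y
      by (rule partial_gain_strict_antimono[OF \<open>0 < cF\<close> that])
  qed
  then show ?thesis unfolding sigmaP_def partial_gain_def .
qed

lemma integral_max: "(\<integral>\<omega>. max z (fst \<omega>) \<partial>A) = z + mean_excess (\<lambda>_. 1) z"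
proof -
  have "(\<integral>\<omega>. max z (fst \<omega>) \<partial>A) = (\<integral>\<omega>. z + max 0 (fst \<omega> - z) \<partial>A)"
    by (rule Bochner_Integration.integral_cong) (auto simp: max_def)
  also have "\<dots> = z + (\<integral>\<omega>. max 0 (fst \<omega> - z) \<partial>A)"
    using integrable_prize_fun'[OF slope01_linear_growth[OF slope01_excess]]
    by (simp add: prob_space)
  finally show ?thesis by (simp add: integral_excess)
qed

lemma sigmaF_le:
  assumes "0 < c" "sigmaF A c \<le> z"
  shows "- c + (\<integral>\<omega>. max z (fst \<omega>) \<partial>A) \<le> z"
  using mean_excess_antimono[of "\<lambda>_. 1", OF _ assms(2)] sigmaF_eq[OF assms(1)]
  by (simp add: integral_max integral_excess)

lemma condE_max:
  assumes "0 < type_prob A t"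
  shows "condE A t (\<lambda>v. max z v) = z + condE A t (\<lambda>v. max 0 (v - z))"
proof -
  have "(\<lambda>v. max z v) = (\<lambda>v. z + max 0 (v - z))" by (auto simp: max_def)
  then show ?thesis
    using condE_const_add[OF assms slope01_linear_growth[OF slope01_excess]] by simp
qed

lemma sigmaFcond_le:
  assumes "0 < c" "0 < type_prob A t" "sigmaFcond A c t \<le> z"
  shows "- c + condE A t (\<lambda>v. max z v) \<le> z"
proof -
  have "condE A t (\<lambda>v. max 0 (v - z)) \<le> condE A t (\<lambda>v. max 0 (v - sigmaFcond A c t))"
    using assms(3) by (intro condE_mono slope01_linear_growth slope01_excess) auto
  then show ?thesis
    using sigmaFcond_eq[OF assms(1,2)] condE_max[OF assms(2)] by simp
qed

lemma condE_max_min: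
  assumes p: "0 < type_prob A t" and sigma: "condE A t (\<lambda>v. max 0 (v - \<sigma>)) = c"
  shows "condE A t (\<lambda>v. max z (min v \<sigma>)) = z + max 0 (- c + condE A t (\<lambda>v. max 0 (v - z)))"
proof (cases "\<sigma> \<le> z")
  case True
  have "condE A t (\<lambda>v. max 0 (v - z)) \<le> c"
    unfolding sigma[symmetric] using True by (intro condE_mono slope01_linear_growth slope01_excess) auto
  moreover have "(\<lambda>v. max z (min v \<sigma>)) = (\<lambda>_. z)" using True by (auto simp: max_def min_def)
  ultimately show ?thesis using condE_const[OF p] by simp
next
  case False
  have lg: "linear_growth (\<lambda>v. max 0 (v - s))" for s
    by (rule slope01_linear_growth[OF slope01_excess])
  have "c \<le> condE A t (\<lambda>v. max 0 (v - z))"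
    unfolding sigma[symmetric] using False by (intro condE_mono lg) auto
  moreover have "(\<lambda>v. max z (min v \<sigma>)) = (\<lambda>v. z + (max 0 (v - z) + max 0 (v - \<sigma>) * - 1))"
    using False by (auto simp: max_def min_def fun_eq_iff)
  moreover have "condE A t (\<lambda>v. z + (max 0 (v - z) + max 0 (v - \<sigma>) * - 1))
      = z + condE A t (\<lambda>v. max 0 (v - z) + max 0 (v - \<sigma>) * - 1)"
    by (intro condE_const_add[OF p] linear_growth_add linear_growth_mult_const lg)
  moreover have "condE A t (\<lambda>v. max 0 (v - z) + max 0 (v - \<sigma>) * - 1)
      = condE A t (\<lambda>v. max 0 (v - z)) - c"
    unfolding condE_add[OF lg linear_growth_mult_const[OF lg]] condE_mult_const sigma by simp
  ultimately show ?thesis by simp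
qed

lemma partial_gain_le:
  "0 < cF \<Longrightarrow> 0 < cP \<Longrightarrow> sigmaP A cF cP \<le> z \<Longrightarrow> partial_gain cF z \<le> cP"
  using partial_gain_antimono[of "sigmaP A cF cP" z cF] sigmaP_eq[of cF cP]
  by (simp add: partial_gain_def)

end

section \<open>Exchanging the expectations of two boxes\<close>

lemma (in pair_prob_space) integrable_fst_comp:
  fixes f :: "_ \<Rightarrow> _::{banach, second_countable_topology}"
  assumes "integrable M1 f"
  shows "integrable (M1 \<Otimes>\<^sub>M M2) (\<lambda>p. f (fst p))"
  by (rule integrable_distr[OF measurable_fst]) (simp add: assms M2.distr_pair_fst)

lemma (in pair_prob_space) integrable_snd_comp:
  fixes f :: "_ \<Rightarrow> _::{banach, second_countable_topology}"
  assumes "integrable M2 f"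
  shows "integrable (M1 \<Otimes>\<^sub>M M2) (\<lambda>p. f (snd p))"
proof -
  interpret swapped: pair_prob_space M2 M1 ..
  have "integrable (M2 \<Otimes>\<^sub>M M1) (\<lambda>p. f (fst p))"
    using assms by (rule swapped.integrable_fst_comp)
  then show ?thesis
    using integrable_product_swap_iff[of "\<lambda>p. f (snd p)"] by (simp add: case_prod_beta')
qed

lemma integrable_pair_prize_fun:
  fixes A :: "(real \<times> 's::finite) measure" and B :: "(real \<times> 't::finite) measure"
  assumes A: "box_law A" and B: "box_law B" and H: "linear_growth2 H"
  shows "integrable (A \<Otimes>\<^sub>M B) (\<lambda>(a, b). H (fst a) (fst b) * w2 (snd b) * w1 (snd a))"
proof -
  interpret A: box_law A by (rule A)
  interpret B: box_law B by (rule B)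
  interpret AB: pair_prob_space A B ..
  obtain K L where [measurable]: "case_prod H \<in> borel_measurable (borel \<Otimes>\<^sub>M borel)"
    and bound: "\<And>x v. \<bar>H x v\<bar> \<le> K + L * (\<bar>x\<bar> + \<bar>v\<bar>)"
    using H by (auto simp: linear_growth2_def)
  define W where "W = (\<Sum>t\<in>UNIV. \<bar>w1 t\<bar>) * (\<Sum>t\<in>UNIV. \<bar>w2 t\<bar>)"
  have w_le: "\<bar>w1 s\<bar> * \<bar>w2 t\<bar> \<le> W" for s t
    unfolding W_def by (intro mult_mono member_le_sum) (auto simp: sum_nonneg)
  let ?f = "\<lambda>(a, b). H (fst a) (fst b) * w2 (snd b) * w1 (snd a)"
  let ?g = "\<lambda>p. W * (\<bar>K\<bar> + \<bar>L\<bar> * \<bar>fst (fst p)\<bar> + \<bar>L\<bar> * \<bar>fst (snd p)\<bar>)"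
  show ?thesis
  proof (rule Bochner_Integration.integrable_bound)
    show "integrable (A \<Otimes>\<^sub>M B) ?g"
      using AB.integrable_fst_comp[OF integrable_abs[OF A.integrable_prize]]
        AB.integrable_snd_comp[OF integrable_abs[OF B.integrable_prize]]
      by auto
    have "(\<lambda>p. case_prod H (fst (fst p), fst (snd p)) * w2 (snd (snd p)) * w1 (snd (fst p)))
        \<in> borel_measurable (A \<Otimes>\<^sub>M B)"
      by measurable
    then show "?f \<in> borel_measurable (A \<Otimes>\<^sub>M B)"
      by (simp add: case_prod_beta')
    show "AE p in A \<Otimes>\<^sub>M B. norm (?f p) \<le> norm (?g p)"
    proof (rule AE_I2)
      fix p :: "(real \<times> 's) \<times> (real \<times> 't)"
      have "\<bar>H (fst (fst p)) (fst (snd p))\<bar> \<le> \<bar>K\<bar> + \<bar>L\<bar> * \<bar>fst (fst p)\<bar> + \<bar>L\<bar> * \<bar>fst (snd p)\<bar>"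
        using bound[of "fst (fst p)" "fst (snd p)"] abs_ge_self[of K]
          mult_right_mono[OF abs_ge_self[of L], of "\<bar>fst (fst p)\<bar> + \<bar>fst (snd p)\<bar>"]
        by (simp add: distrib_left)
      then have "\<bar>H (fst (fst p)) (fst (snd p))\<bar> * (\<bar>w1 (snd (fst p))\<bar> * \<bar>w2 (snd (snd p))\<bar>)
          \<le> (\<bar>K\<bar> + \<bar>L\<bar> * \<bar>fst (fst p)\<bar> + \<bar>L\<bar> * \<bar>fst (snd p)\<bar>) * W"
        using w_le[of "snd (fst p)" "snd (snd p)"] by (intro mult_mono) auto
      then have "\<bar>?f p\<bar> \<le> ?g p"
        by (simp add: case_prod_beta' abs_mult ac_simps)
      then show "norm (?f p) \<le> norm (?g p)"
        unfolding real_norm_def using abs_ge_self[of "?g p"] by linarith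
    qed
  qed
qed

lemma prize_expect_Fubini:
  fixes A :: "(real \<times> 's::finite) measure" and B :: "(real \<times> 't::finite) measure"
  assumes A: "box_law A" and B: "box_law B" and H: "linear_growth2 H"
  shows "prize_expect A w1 (\<lambda>x. prize_expect B w2 (H x))
       = prize_expect B w2 (\<lambda>v. prize_expect A w1 (\<lambda>x. H x v))"
proof -
  interpret AB: pair_prob_space A B
    using A B by (simp add: box_law_def pair_prob_space_def pair_sigma_finite_def
        prob_space_imp_sigma_finite)
  let ?f = "\<lambda>a b. H (fst a) (fst b) * w2 (snd b) * w1 (snd a)"
  have "(\<integral>b. (\<integral>a. ?f a b \<partial>A) \<partial>B) = (\<integral>a. (\<integral>b. ?f a b \<partial>B) \<partial>A)"
    by (rule AB.Fubini_integral) (rule integrable_pair_prize_fun[OF assms])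
  moreover have "(\<integral>b. ?f a b \<partial>B) = prize_expect B w2 (H (fst a)) * w1 (snd a)" for a
    by (simp add: prize_expect_def)
  moreover have "(\<integral>a. ?f a b \<partial>A) = prize_expect A w1 (\<lambda>x. H x (fst b)) * w2 (snd b)" for b
  proof -
    have "(\<integral>a. ?f a b \<partial>A) = (\<integral>a. H (fst a) (fst b) * w1 (snd a) * w2 (snd b) \<partial>A)"
      by (simp add: ac_simps)
    then show ?thesis by (simp add: prize_expect_def)
  qed
  ultimately show ?thesis by (simp add: prize_expect_def)
qed

lemma integral_condE_swap:
  fixes A :: "(real \<times> 's::finite) measure" and B :: "(real \<times> 't::finite) measure"
  assumes "box_law A" "box_law B" "linear_growth2 H"
  shows "(\<integral>\<omega>. condE B t (H (fst \<omega>)) \<partial>A) = condE B t (\<lambda>v. \<integral>\<omega>. H (fst \<omega>) v \<partial>A)"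
  using prize_expect_Fubini[OF assms, of "\<lambda>_. 1" "indicator {t}"]
  by (simp add: condE_prize_expect prize_expect_one)

lemma condE_condE_swap:
  fixes A :: "(real \<times> 's::finite) measure" and B :: "(real \<times> 't::finite) measure"
  assumes "box_law A" "box_law B" "linear_growth2 H"
  shows "condE A s (\<lambda>x. condE B t (H x)) = condE B t (\<lambda>v. condE A s (\<lambda>x. H x v))"
  using prize_expect_Fubini[OF assms, of "indicator {s}" "indicator {t}"]
  by (simp add: condE_prize_expect prize_expect_def)

lemma (in box_law) integral_type_condE_swap:
  assumes B: "box_law B" and F: "\<And>s. linear_growth (F s)"
  shows "(\<integral>\<omega>. condE B t (F (snd \<omega>)) \<partial>A) = condE B t (\<lambda>v. \<integral>\<omega>. F (snd \<omega>) v \<partial>A)"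
proof -
  have "(\<integral>\<omega>. condE B t (F (snd \<omega>)) \<partial>A) = (\<Sum>s\<in>UNIV. condE B t (F s) * type_prob A s)"
    by (rule integral_type_fun)
  also have "\<dots> = condE B t (\<lambda>v. \<Sum>s\<in>UNIV. F s v * type_prob A s)"
    using F by (simp add: box_law.condE_sum[OF B] box_law.condE_mult_const[OF B] linear_growth_mult_const)
  also have "(\<lambda>v. \<Sum>s\<in>UNIV. F s v * type_prob A s) = (\<lambda>v. \<integral>\<omega>. F (snd \<omega>) v \<partial>A)"
    by (rule ext) (rule integral_type_fun[symmetric])
  finally show ?thesis .
qed

section \<open>The Bellman equation\<close>

lemma Max_action_values_le:
  fixes a a' d :: real
  assumes "finite C" "finite D" "a \<le> a' + d"
    and "\<And>j. j \<in> C \<Longrightarrow> f j \<le> f' j + d" "\<And>j. j \<in> C \<Longrightarrow> g j \<le> g' j + d"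
    and "\<And>j. j \<in> D \<Longrightarrow> h j \<le> h' j + d"
  shows "Max ({a} \<union> f ` C \<union> g ` C \<union> h ` D) \<le> Max ({a'} \<union> f' ` C \<union> g' ` C \<union> h' ` D) + d"
proof (rule Max.boundedI)
  let ?S = "{a'} \<union> f' ` C \<union> g' ` C \<union> h' ` D"
  have ge: "u \<le> Max ?S" if "u \<in> ?S" for u
    using assms(1,2) that by (intro Max_ge) auto
  fix u assume "u \<in> {a} \<union> f ` C \<union> g ` C \<union> h ` D"
  then consider "u = a" | j where "j \<in> C" "u = f j" | j where "j \<in> C" "u = g j"
    | j where "j \<in> D" "u = h j"
    by blast
  then show "u \<le> Max ?S + d"
  proof cases
    case 1 then show ?thesis using assms(3) ge[of a'] by simp
  next
    case (2 j) then show ?thesis using assms(4)[of j] ge[of "f' j"] by auto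
  next
    case (3 j) then show ?thesis using assms(5)[of j] ge[of "g' j"] by auto
  next
    case (4 j) then show ?thesis using assms(6)[of j] ge[of "h' j"] by auto
  qed
qed (use assms(1,2) in auto)

lemma slope01_Max_action_values:
  assumes "finite C" "finite D"
    and "\<And>j. j \<in> C \<Longrightarrow> slope01 (f j)" "\<And>j. j \<in> C \<Longrightarrow> slope01 (g j)"
    and "\<And>j. j \<in> D \<Longrightarrow> slope01 (h j)"
  shows "slope01 (\<lambda>z. Max ({z} \<union> (\<lambda>j. f j z) ` C \<union> (\<lambda>j. g j z) ` C \<union> (\<lambda>j. h j z) ` D))"
proof (rule slope01I)
  fix x y :: real
  assume "x \<le> y"
  then have "f j x \<le> f j y + 0" "g j x \<le> g j y + 0" "f j y \<le> f j x + (y - x)" "g j y \<le> g j x + (y - x)"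
    if "j \<in> C" for j
    using assms(3,4)[OF that] by (simp_all add: slope01_mono slope01_shift)
  moreover have "h j x \<le> h j y + 0" "h j y \<le> h j x + (y - x)" if "j \<in> D" for j
    using assms(5)[OF that] \<open>x \<le> y\<close> by (simp_all add: slope01_mono slope01_shift)
  ultimately show "Max ({x} \<union> (\<lambda>j. f j x) ` C \<union> (\<lambda>j. g j x) ` C \<union> (\<lambda>j. h j x) ` D)
      \<le> Max ({y} \<union> (\<lambda>j. f j y) ` C \<union> (\<lambda>j. g j y) ` C \<union> (\<lambda>j. h j y) ` D)"
    and "Max ({y} \<union> (\<lambda>j. f j y) ` C \<union> (\<lambda>j. g j y) ` C \<union> (\<lambda>j. h j y) ` D)
      \<le> Max ({x} \<union> (\<lambda>j. f j x) ` C \<union> (\<lambda>j. g j x) ` C \<union> (\<lambda>j. h j x) ` D) + (y - x)"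
    using Max_action_values_le[OF assms(1,2), of x y 0] Max_action_values_le[OF assms(1,2), of y x "y - x"]
      \<open>x \<le> y\<close> by simp_all
qed

definition QFclosed :: "(nat \<Rightarrow> (real \<times> 't) measure) \<Rightarrow> (nat \<Rightarrow> real) \<Rightarrow> (nat \<Rightarrow> real)
    \<Rightarrow> nat set \<Rightarrow> (nat \<rightharpoonup> 't) \<Rightarrow> real \<Rightarrow> nat \<Rightarrow> real" where
  "QFclosed M cF cP C P y j = - cF j + (\<integral>\<omega>. optval M cF cP (C - {j}) P (max y (fst \<omega>)) \<partial>M j)"

definition QPclosed :: "(nat \<Rightarrow> (real \<times> 't) measure) \<Rightarrow> (nat \<Rightarrow> real) \<Rightarrow> (nat \<Rightarrow> real)
    \<Rightarrow> nat set \<Rightarrow> (nat \<rightharpoonup> 't) \<Rightarrow> real \<Rightarrow> nat \<Rightarrow> real" where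
  "QPclosed M cF cP C P y j = - cP j + (\<integral>\<omega>. optval M cF cP (C - {j}) (P(j \<mapsto> snd \<omega>)) y \<partial>M j)"

definition state_size :: "nat set \<Rightarrow> (nat \<rightharpoonup> 't) \<Rightarrow> nat" where
  "state_size C P = 2 * card C + card (dom P)"

lemma state_size_F_open: "finite C \<Longrightarrow> j \<in> C \<Longrightarrow> state_size (C - {j}) P < state_size C P"
  using card_Diff1_less[of C j] by (simp add: state_size_def)

lemma state_size_P_open:
  assumes "finite C" "finite (dom P)" "j \<in> C"
  shows "state_size (C - {j}) (P(j \<mapsto> t)) < state_size C P"
proof -
  have "card (C - {j}) < card C" using assms by (intro card_Diff1_less)
  moreover have "card (dom (P(j \<mapsto> t))) \<le> Suc (card (dom P))"
    using assms by (simp add: card_insert_if)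
  ultimately show ?thesis by (simp add: state_size_def)
qed

lemma state_size_F_open_partial:
  "finite (dom P) \<Longrightarrow> j \<in> dom P \<Longrightarrow> state_size C (P(j := None)) < state_size C P"
  using card_Diff1_less[of "dom P" j] by (simp add: state_size_def)

locale pandora =
  fixes N :: nat and M :: "nat \<Rightarrow> (real \<times> 't::finite) measure" and cF cP :: "nat \<Rightarrow> real"
  assumes box_law: "\<And>i. i < N \<Longrightarrow> box_law (M i)"
    and cF_pos: "\<And>i. i < N \<Longrightarrow> 0 < cF i"
    and cP_pos: "\<And>i. i < N \<Longrightarrow> 0 < cP i"
begin

abbreviation "V \<equiv> optval M cF cP"
abbreviation "QF \<equiv> QFclosed M cF cP"
abbreviation "QP \<equiv> QPclosed M cF cP"
abbreviation "QFp \<equiv> QFpartial M cF cP"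

definition action_values :: "(nat set \<Rightarrow> (nat \<rightharpoonup> 't) \<Rightarrow> real \<Rightarrow> real) \<Rightarrow> nat set \<Rightarrow> (nat \<rightharpoonup> 't)
    \<Rightarrow> real \<Rightarrow> real set" where
  "action_values F C P z = {z}
     \<union> (\<lambda>j. - cF j + (\<integral>\<omega>. F (C - {j}) P (max z (fst \<omega>)) \<partial>M j)) ` C
     \<union> (\<lambda>j. - cP j + (\<integral>\<omega>. F (C - {j}) (P(j \<mapsto> snd \<omega>)) z \<partial>M j)) ` C
     \<union> (\<lambda>j. - cF j + condE (M j) (the (P j)) (\<lambda>v. F C (P(j := None)) (max z v))) ` dom P"

lemma W_Suc: "W M cF cP (Suc n) C P z = Max (action_values (W M cF cP n) C P z)"
  by (simp add: action_values_def)

lemma action_values_cong: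
  assumes "finite C" "finite (dom P)"
    and F: "\<And>C' P'. finite C' \<Longrightarrow> finite (dom P') \<Longrightarrow> state_size C' P' < state_size C P
      \<Longrightarrow> F C' P' = F' C' P'"
  shows "action_values F C P z = action_values F' C P z"
proof -
  have F1: "F (C - {j}) P = F' (C - {j}) P" if "j \<in> C" for j
    using assms(1,2) that by (intro F state_size_F_open) auto
  have F2: "F (C - {j}) (P(j \<mapsto> t)) = F' (C - {j}) (P(j \<mapsto> t))" if "j \<in> C" for j t
    using assms(1,2) that by (intro F state_size_P_open) auto
  have F3: "F C (P(j := None)) = F' C (P(j := None))" if "j \<in> dom P" for j
    using assms(1,2) that by (intro F state_size_F_open_partial) auto
  show ?thesis
    unfolding action_values_def
    by (simp add: F1 F2 F3 cong: image_cong)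
qed

lemma W_eq_optval:
  "finite C \<Longrightarrow> finite (dom P) \<Longrightarrow> state_size C P \<le> n \<Longrightarrow> W M cF cP n C P = V C P"
proof (induction n arbitrary: C P rule: less_induct)
  case (less n)
  show ?case
  proof (cases "state_size C P")
    case 0
    then have "C = {}" "dom P = {}" using less.prems by (auto simp: state_size_def)
    moreover have "W M cF cP m {} P = (\<lambda>z. z)" if "dom P = {}" for m
      using that by (cases m) auto
    ultimately show ?thesis by (simp add: optval_def)
  next
    case (Suc r)
    then obtain m where n: "n = Suc m" and "r \<le> m"
      using less.prems(3) by (cases n) auto
    have action_values_eq: "action_values (W M cF cP k) C P z = action_values V C P z" if "k < n" "r \<le> k" for k z
      using less.prems Suc that by (intro action_values_cong less.IH) auto
    have "W M cF cP n C P z = V C P z" for z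
    proof -
      have "W M cF cP n C P z = Max (action_values V C P z)"
        using action_values_eq[of m] \<open>r \<le> m\<close> by (simp add: n W_Suc del: W.simps)
      also have "\<dots> = W M cF cP (Suc r) C P z"
        using action_values_eq[of r] Suc less.prems by (simp add: W_Suc del: W.simps)
      also have "\<dots> = V C P z"
        using Suc by (simp add: optval_def state_size_def del: W.simps)
      finally show ?thesis .
    qed
    then show ?thesis by blast
  qed
qed

lemma optval_bellman:
  assumes "finite C" "finite (dom P)"
  shows "V C P z = Max ({z} \<union> QF C P z ` C \<union> QP C P z ` C \<union> QFp C P z ` dom P)"
proof -
  have "V C P z = W M cF cP (Suc (state_size C P)) C P z"
    using W_eq_optval[OF assms, of "Suc (state_size C P)"] by simp
  also have "\<dots> = Max (action_values V C P z)"
    unfolding W_Suc using assms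
    by (intro arg_cong[where f=Max] action_values_cong W_eq_optval) auto
  also have "action_values V C P z = {z} \<union> QF C P z ` C \<union> QP C P z ` C \<union> QFp C P z ` dom P"
    by (simp add: action_values_def QFclosed_def QPclosed_def QFpartial_def)
  finally show ?thesis .
qed

definition valid_state :: "nat set \<Rightarrow> (nat \<rightharpoonup> 't) \<Rightarrow> bool" where
  "valid_state C P \<longleftrightarrow> C \<subseteq> {..<N} \<and> dom P \<subseteq> {..<N} \<and> C \<inter> dom P = {}"

lemma valid_state_finite: "valid_state C P \<Longrightarrow> finite C" "valid_state C P \<Longrightarrow> finite (dom P)"
  by (auto simp: valid_state_def intro: finite_subset)

lemma valid_state_closed_lt: "valid_state C P \<Longrightarrow> j \<in> C \<Longrightarrow> j < N"
  and valid_state_partial_lt: "valid_state C P \<Longrightarrow> j \<in> dom P \<Longrightarrow> j < N"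
  by (auto simp: valid_state_def)

lemma valid_state_F_open: "valid_state C P \<Longrightarrow> valid_state (C - {j}) P"
  and valid_state_P_open: "valid_state C P \<Longrightarrow> j \<in> C \<Longrightarrow> valid_state (C - {j}) (P(j \<mapsto> t))"
  and valid_state_F_open_partial: "valid_state C P \<Longrightarrow> valid_state C (P(j := None))"
  by (auto simp: valid_state_def)

lemma optval_ge:
  assumes "valid_state C P"
  shows stop_le_optval: "z \<le> V C P z"
    and QFclosed_le_optval: "j \<in> C \<Longrightarrow> QF C P z j \<le> V C P z"
    and QPclosed_le_optval: "j \<in> C \<Longrightarrow> QP C P z j \<le> V C P z"
    and QFpartial_le_optval: "j \<in> dom P \<Longrightarrow> QFp C P z j \<le> V C P z"
  using valid_state_finite[OF assms]
  by (auto simp: optval_bellman[OF valid_state_finite[OF assms]] intro: Max_ge)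

lemma optval_le:
  assumes "valid_state C P" "z \<le> R"
    and "\<And>j. j \<in> C \<Longrightarrow> QF C P z j \<le> R" "\<And>j. j \<in> C \<Longrightarrow> QP C P z j \<le> R"
    and "\<And>j. j \<in> dom P \<Longrightarrow> QFp C P z j \<le> R"
  shows "V C P z \<le> R"
  unfolding optval_bellman[OF valid_state_finite[OF assms(1)]]
  using assms valid_state_finite[OF assms(1)] by (intro Max.boundedI) auto

lemma QFclosed_slope01:
  "j < N \<Longrightarrow> slope01 (V (C - {j}) P) \<Longrightarrow> slope01 (\<lambda>z. QF C P z j)"
  unfolding QFclosed_def by (intro slope01_add_const box_law.integral_max_slope01 box_law)

lemma QPclosed_slope01:
  "j < N \<Longrightarrow> (\<And>t. slope01 (V (C - {j}) (P(j \<mapsto> t)))) \<Longrightarrow> slope01 (\<lambda>z. QP C P z j)"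
  unfolding QPclosed_def by (intro slope01_add_const box_law.integral_type_slope01 box_law)

lemma QFpartial_slope01:
  "j < N \<Longrightarrow> slope01 (V C (P(j := None))) \<Longrightarrow> slope01 (\<lambda>z. QFp C P z j)"
  unfolding QFpartial_def by (intro slope01_add_const box_law.condE_max_slope01 box_law)

lemma optval_slope01: "valid_state C P \<Longrightarrow> slope01 (V C P)"
proof (induction "state_size C P" arbitrary: C P rule: less_induct)
  case less
  note fin = valid_state_finite[OF less.prems]
  have "slope01 (\<lambda>z. QF C P z j)" if "j \<in> C" for j
    using less fin that valid_state_closed_lt[OF less.prems that]
    by (intro QFclosed_slope01 less.hyps state_size_F_open valid_state_F_open)
  moreover have "slope01 (\<lambda>z. QP C P z j)" if "j \<in> C" for j
    using less fin that valid_state_closed_lt[OF less.prems that]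
    by (intro QPclosed_slope01 less.hyps state_size_P_open valid_state_P_open)
  moreover have "slope01 (\<lambda>z. QFp C P z j)" if "j \<in> dom P" for j
    using less fin that valid_state_partial_lt[OF less.prems that]
    by (intro QFpartial_slope01 less.hyps state_size_F_open_partial valid_state_F_open_partial)
  ultimately have "slope01 (\<lambda>z. Max ({z} \<union> QF C P z ` C \<union> QP C P z ` C \<union> QFp C P z ` dom P))"
    by (intro slope01_Max_action_values fin)
  then show ?case
    unfolding optval_bellman[OF fin, symmetric] by simp
qed

end

section \<open>Capping the prize of a partially opened box\<close>

locale capped_box = pandora N M cF cP
  for N :: nat and M :: "nat \<Rightarrow> (real \<times> 't::finite) measure" and cF cP :: "nat \<Rightarrow> real" +
  fixes k :: nat and tk :: 't and \<sigma> :: real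
  assumes k_lt: "k < N"
    and type_pos: "0 < type_prob (M k) tk"
    and sigma_eq: "condE (M k) tk (\<lambda>v. max 0 (v - \<sigma>)) = cF k"
begin

sublocale K: box_law "M k"
  by (rule box_law[OF k_lt])

text \<open>Box \<open>k\<close>, of revealed type \<open>tk\<close>, is replaced by a free prize \<open>min V\<^sub>k \<sigma>\<close> drawn from the
  conditional law of \<open>V\<^sub>k\<close> given \<open>tk\<close>.\<close>

definition capped :: "nat set \<Rightarrow> (nat \<rightharpoonup> 't) \<Rightarrow> real \<Rightarrow> real" where
  "capped C P z = condE (M k) tk (\<lambda>v. V C (P(k := None)) (max z (min v \<sigma>)))"

lemma slope01_cap: "slope01 (\<lambda>v. max z (min v \<sigma>))"
  by (rule slope01_comp[OF slope01_max slope01_min])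

lemma linear_growth_capped: "slope01 G \<Longrightarrow> linear_growth (\<lambda>v. G (max z (min v \<sigma>)))"
  by (intro slope01_linear_growth slope01_comp[OF _ slope01_cap])

lemma condE_le_capped:
  assumes "valid_state C P" "slope01 Q" "\<And>y. Q y \<le> V C (P(k := None)) y"
  shows "condE (M k) tk (\<lambda>v. Q (max z (min v \<sigma>))) \<le> capped C P z"
  unfolding capped_def using assms
  by (intro K.condE_mono linear_growth_capped optval_slope01 valid_state_F_open_partial)

lemma stop_le_capped:
  assumes "valid_state C P"
  shows "z \<le> capped C P z"
proof -
  have "z \<le> V C (P(k := None)) (max z (min v \<sigma>))" for v
    using stop_le_optval[OF valid_state_F_open_partial[OF assms], of "max z (min v \<sigma>)"] by simp
  then have "condE (M k) tk (\<lambda>_. z) \<le> capped C P z"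
    unfolding capped_def using assms
    by (intro K.condE_mono linear_growth_const linear_growth_capped optval_slope01
        valid_state_F_open_partial)
  then show ?thesis using K.condE_const[OF type_pos] by simp
qed

lemma QFclosed_le_capped:
  assumes valid: "valid_state C P" and j: "j \<in> C"
    and IH: "\<And>x. V (C - {j}) P x \<le> capped (C - {j}) P x"
  shows "QF C P z j \<le> capped C P z"
proof -
  have jN: "j < N" using valid_state_closed_lt[OF valid j] .
  interpret J: box_law "M j" by (rule box_law[OF jN])
  let ?G = "V (C - {j}) (P(k := None))"
  let ?H = "\<lambda>x v. ?G (max (max z (min v \<sigma>)) x)"
  have G: "slope01 ?G"
    using valid by (intro optval_slope01 valid_state_F_open valid_state_F_open_partial)
  have H: "linear_growth2 ?H"
    by (rule linear_growth2_max[OF G slope01_cap])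
  have "(\<integral>\<omega>. V (C - {j}) P (max z (fst \<omega>)) \<partial>M j) \<le> (\<integral>\<omega>. condE (M k) tk (?H (fst \<omega>)) \<partial>M j)"
  proof (rule integral_mono)
    show "integrable (M j) (\<lambda>\<omega>. V (C - {j}) P (max z (fst \<omega>)))"
      using valid by (intro J.integrable_prize_fun' slope01_linear_growth
          slope01_comp[OF optval_slope01 slope01_max] valid_state_F_open)
    show "integrable (M j) (\<lambda>\<omega>. condE (M k) tk (?H (fst \<omega>)))"
      by (intro J.integrable_prize_fun' K.linear_growth_condE H)
    show "V (C - {j}) P (max z (fst \<omega>)) \<le> condE (M k) tk (?H (fst \<omega>))" for \<omega>
      using IH[of "max z (fst \<omega>)"] unfolding capped_def by (simp add: ac_simps)
  qed
  also have "\<dots> = condE (M k) tk (\<lambda>v. \<integral>\<omega>. ?H (fst \<omega>) v \<partial>M j)"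
    by (rule integral_condE_swap[OF box_law[OF jN] box_law[OF k_lt] H])
  finally have "QF C P z j \<le> - cF j + condE (M k) tk (\<lambda>v. \<integral>\<omega>. ?H (fst \<omega>) v \<partial>M j)"
    unfolding QFclosed_def by simp
  also have "\<dots> = condE (M k) tk (\<lambda>v. QF C (P(k := None)) (max z (min v \<sigma>)) j)"
    unfolding QFclosed_def
    using K.condE_const_add[OF type_pos
        J.linear_growth_prize_expect[where w="\<lambda>_. 1", OF linear_growth2_swap[OF H]], where c="- cF j"]
    by (simp add: prize_expect_one)
  also have "\<dots> \<le> capped C P z"
    using valid jN G j
    by (intro condE_le_capped QFclosed_slope01 QFclosed_le_optval valid_state_F_open_partial)
  finally show ?thesis .
qed

lemma QPclosed_le_capped:
  assumes valid: "valid_state C P" and k: "k \<in> dom P" and j: "j \<in> C"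
    and IH: "\<And>s x. V (C - {j}) (P(j \<mapsto> s)) x \<le> capped (C - {j}) (P(j \<mapsto> s)) x"
  shows "QP C P z j \<le> capped C P z"
proof -
  have jN: "j < N" using valid_state_closed_lt[OF valid j] .
  have "j \<noteq> k" using valid j k by (auto simp: valid_state_def)
  interpret J: box_law "M j" by (rule box_law[OF jN])
  let ?G = "\<lambda>s. V (C - {j}) ((P(k := None))(j \<mapsto> s))"
  have G: "slope01 (?G s)" for s
    using valid j by (intro optval_slope01 valid_state_P_open valid_state_F_open_partial) auto
  have "(\<integral>\<omega>. V (C - {j}) (P(j \<mapsto> snd \<omega>)) z \<partial>M j)
      \<le> (\<integral>\<omega>. condE (M k) tk (\<lambda>v. ?G (snd \<omega>) (max z (min v \<sigma>))) \<partial>M j)"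
  proof (rule integral_mono)
    show "V (C - {j}) (P(j \<mapsto> snd \<omega>)) z \<le> condE (M k) tk (\<lambda>v. ?G (snd \<omega>) (max z (min v \<sigma>)))" for \<omega>
      using IH[of "snd \<omega>" z] fun_upd_twist[OF \<open>j \<noteq> k\<close>, of P "Some (snd \<omega>)" None]
      by (simp add: capped_def)
  qed (rule J.integrable_type_fun[of "\<lambda>s. V (C - {j}) (P(j \<mapsto> s)) z"],
      rule J.integrable_type_fun[of "\<lambda>s. condE (M k) tk (\<lambda>v. ?G s (max z (min v \<sigma>)))"])
  also have "\<dots> = condE (M k) tk (\<lambda>v. \<integral>\<omega>. ?G (snd \<omega>) (max z (min v \<sigma>)) \<partial>M j)"
    by (rule J.integral_type_condE_swap[OF box_law[OF k_lt] linear_growth_capped[OF G]])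
  finally have "QP C P z j \<le> - cP j + condE (M k) tk (\<lambda>v. \<integral>\<omega>. ?G (snd \<omega>) (max z (min v \<sigma>)) \<partial>M j)"
    unfolding QPclosed_def by simp
  also have "\<dots> = condE (M k) tk (\<lambda>v. QP C (P(k := None)) (max z (min v \<sigma>)) j)"
    unfolding QPclosed_def
    using K.condE_const_add[OF type_pos linear_growth_capped[OF J.integral_type_slope01[of ?G, OF G]],
        where c="- cP j"]
    by simp
  also have "\<dots> \<le> capped C P z"
    using valid jN G j
    by (intro condE_le_capped QPclosed_slope01 QPclosed_le_optval valid_state_F_open_partial)
  finally show ?thesis .
qed

lemma QFpartial_le_capped:
  assumes valid: "valid_state C P" and j: "j \<in> dom P" "j \<noteq> k"
    and IH: "\<And>x. V C (P(j := None)) x \<le> capped C (P(j := None)) x"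
  shows "QFp C P z j \<le> capped C P z"
proof -
  have jN: "j < N" using valid_state_partial_lt[OF valid j(1)] .
  interpret J: box_law "M j" by (rule box_law[OF jN])
  obtain s where s: "P j = Some s" using j(1) by auto
  have jP: "j \<in> dom (P(k := None))" using j by simp
  let ?G = "V C ((P(k := None))(j := None))"
  let ?H = "\<lambda>x v. ?G (max (max z (min v \<sigma>)) x)"
  have G: "slope01 ?G"
    using valid by (intro optval_slope01 valid_state_F_open_partial)
  have H: "linear_growth2 ?H"
    by (rule linear_growth2_max[OF G slope01_cap])
  have "condE (M j) s (\<lambda>x. V C (P(j := None)) (max z x)) \<le> condE (M j) s (\<lambda>x. condE (M k) tk (?H x))"
  proof (rule J.condE_mono)
    show "linear_growth (\<lambda>x. V C (P(j := None)) (max z x))"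
      using valid by (intro slope01_linear_growth slope01_comp[OF optval_slope01 slope01_max]
          valid_state_F_open_partial)
    show "linear_growth (\<lambda>x. condE (M k) tk (?H x))"
      by (rule K.linear_growth_condE[OF H])
    show "V C (P(j := None)) (max z x) \<le> condE (M k) tk (?H x)" for x
      using IH[of "max z x"] fun_upd_twist[OF j(2), of P None None]
      by (simp add: capped_def ac_simps)
  qed
  also have "\<dots> = condE (M k) tk (\<lambda>v. condE (M j) s (\<lambda>x. ?H x v))"
    by (rule condE_condE_swap[OF box_law[OF jN] box_law[OF k_lt] H])
  finally have "QFp C P z j \<le> - cF j + condE (M k) tk (\<lambda>v. condE (M j) s (\<lambda>x. ?H x v))"
    unfolding QFpartial_def using s by simp
  also have "\<dots> = condE (M k) tk (\<lambda>v. QFp C (P(k := None)) (max z (min v \<sigma>)) j)"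
    unfolding QFpartial_def
    using s j(2) K.condE_const_add[OF type_pos J.linear_growth_condE[OF linear_growth2_swap[OF H]],
        where c="- cF j"]
    by simp
  also have "\<dots> \<le> capped C P z"
    using valid jN G jP
    by (intro condE_le_capped QFpartial_slope01 QFpartial_le_optval valid_state_F_open_partial)
  finally show ?thesis .
qed

lemma QFpartial_k_le_capped:
  assumes valid: "valid_state C P" and k: "P k = Some tk"
  shows "QFp C P z k \<le> capped C P z"
proof -
  let ?G = "V C (P(k := None))"
  have G: "slope01 ?G"
    using valid by (intro optval_slope01 valid_state_F_open_partial)
  \<comment> \<open>The uncapped prize exceeds the capped one by \<open>(V\<^sub>k - \<sigma>)\<^sup>+\<close>, whose conditional mean is \<open>cF k\<close>.\<close>
  have "?G (max z v) \<le> ?G (max z (min v \<sigma>)) + max 0 (v - \<sigma>)" for v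
  proof -
    have "max z (min v \<sigma>) \<le> max z v" "max z v - max z (min v \<sigma>) \<le> max 0 (v - \<sigma>)"
      by (auto simp: max_def min_def)
    then show ?thesis using slope01_shift[OF G, of "max z (min v \<sigma>)" "max z v"] by linarith
  qed
  then have "condE (M k) tk (\<lambda>v. ?G (max z v))
      \<le> condE (M k) tk (\<lambda>v. ?G (max z (min v \<sigma>)) + max 0 (v - \<sigma>))"
    by (intro K.condE_mono linear_growth_add linear_growth_capped[OF G] slope01_linear_growth
        slope01_comp[OF G slope01_max] slope01_excess)
  also have "\<dots> = capped C P z + cF k"
    unfolding capped_def sigma_eq[symmetric]
    by (intro K.condE_add linear_growth_capped[OF G] slope01_linear_growth[OF slope01_excess])
  finally show ?thesis
    unfolding QFpartial_def using k by simp
qed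

theorem optval_le_capped:
  "valid_state C P \<Longrightarrow> P k = Some tk \<Longrightarrow> V C P z \<le> capped C P z"
proof (induction "state_size C P" arbitrary: C P z rule: less_induct)
  case less
  note valid = less.prems(1) and k = less.prems(2)
  note fin = valid_state_finite[OF valid]
  have "k \<in> dom P" using k by auto
  show ?case
  proof (rule optval_le[OF valid stop_le_capped[OF valid]])
    fix j
    assume j: "j \<in> C"
    then have "j \<noteq> k" using valid \<open>k \<in> dom P\<close> by (auto simp: valid_state_def)
    show "QF C P z j \<le> capped C P z"
      using valid fin j k
      by (intro QFclosed_le_capped less.hyps state_size_F_open valid_state_F_open)
    show "QP C P z j \<le> capped C P z"
      using valid fin j k \<open>j \<noteq> k\<close> \<open>k \<in> dom P\<close>
      by (intro QPclosed_le_capped less.hyps state_size_P_open valid_state_P_open) auto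
  next
    fix j
    assume j: "j \<in> dom P"
    show "QFp C P z j \<le> capped C P z"
    proof (cases "j = k")
      case True
      then show ?thesis using QFpartial_k_le_capped[OF valid k] by simp
    next
      case False
      then show ?thesis
        using valid fin j k
        by (intro QFpartial_le_capped less.hyps state_size_F_open_partial valid_state_F_open_partial)
          auto
    qed
  qed
qed

lemma capped_eq_stop:
  assumes "\<sigma> \<le> y" and stop: "\<And>w. \<sigma> \<le> w \<Longrightarrow> V C (P(k := None)) w = w"
  shows "capped C P y = y"
proof -
  have "V C (P(k := None)) (max y (min v \<sigma>)) = y" for v
  proof -
    have "max y (min v \<sigma>) = y" using \<open>\<sigma> \<le> y\<close> by (auto simp: max_def min_def)
    then show ?thesis using stop[OF \<open>\<sigma> \<le> y\<close>] by simp
  qed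
  then show ?thesis
    unfolding capped_def using K.condE_const[OF type_pos] by simp
qed

lemma QFpartial_k_eq_capped:
  assumes k: "P k = Some tk" and "y < \<sigma>" and stop: "\<And>w. \<sigma> \<le> w \<Longrightarrow> V C (P(k := None)) w = w"
    and valid: "valid_state C P"
  shows "QFp C P y k = capped C P y"
proof -
  let ?G = "V C (P(k := None))"
  have G: "slope01 ?G"
    using valid by (intro optval_slope01 valid_state_F_open_partial)
  have pointwise: "?G (max y v) = ?G (max y (min v \<sigma>)) + max 0 (v - \<sigma>)" for v
  proof (cases "v \<le> \<sigma>")
    case False
    then have "max y v = v" "max y (min v \<sigma>) = \<sigma>" using \<open>y < \<sigma>\<close> by auto
    moreover have "?G v = v" "?G \<sigma> = \<sigma>" using False by (auto intro: stop)
    ultimately show ?thesis using False by simp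
  next
    case True
    then show ?thesis by (simp add: min_def)
  qed
  \<comment> \<open>Not by simp: the right-hand side of \<open>pointwise\<close> matches its left-hand side again.\<close>
  have "condE (M k) tk (\<lambda>v. ?G (max y v))
      = condE (M k) tk (\<lambda>v. ?G (max y (min v \<sigma>)) + max 0 (v - \<sigma>))"
    by (rule arg_cong[where f="condE (M k) tk"], rule ext, rule pointwise)
  also have "\<dots> = capped C P y + cF k"
    unfolding capped_def sigma_eq[symmetric]
    by (rule K.condE_add[OF linear_growth_capped[OF G] slope01_linear_growth[OF slope01_excess]])
  finally show ?thesis
    unfolding QFpartial_def using k by simp
qed

end

section \<open>Stopping above all thresholds\<close>

context pandora
begin

definition thresholds_below :: "nat set \<Rightarrow> (nat \<rightharpoonup> 't) \<Rightarrow> real \<Rightarrow> bool" where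
  "thresholds_below C P z \<longleftrightarrow>
     (\<forall>j\<in>C. sigmaF (M j) (cF j) \<le> z \<and> sigmaP (M j) (cF j) (cP j) \<le> z)
     \<and> (\<forall>j\<in>dom P. sigmaFcond (M j) (cF j) (the (P j)) \<le> z)"

definition positive_types :: "(nat \<rightharpoonup> 't) \<Rightarrow> bool" where
  "positive_types P \<longleftrightarrow> (\<forall>j t. P j = Some t \<longrightarrow> 0 < type_prob (M j) t)"

lemma QFclosed_le_stop:
  assumes valid: "valid_state C P" and j: "j \<in> C" and sigma: "sigmaF (M j) (cF j) \<le> z"
    and stop: "\<And>x. z \<le> x \<Longrightarrow> V (C - {j}) P x = x"
  shows "QF C P z j \<le> z"
proof -
  have jN: "j < N" using valid_state_closed_lt[OF valid j] .
  have "(\<integral>\<omega>. V (C - {j}) P (max z (fst \<omega>)) \<partial>M j) = (\<integral>\<omega>. max z (fst \<omega>) \<partial>M j)"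
    by (rule Bochner_Integration.integral_cong) (simp_all add: stop)
  then show ?thesis
    unfolding QFclosed_def using box_law.sigmaF_le[OF box_law[OF jN] cF_pos[OF jN] sigma] by simp
qed

lemma QFpartial_le_stop:
  assumes valid: "valid_state C P" and j: "P j = Some s" and p: "0 < type_prob (M j) s"
    and sigma: "sigmaFcond (M j) (cF j) s \<le> z"
    and stop: "\<And>x. z \<le> x \<Longrightarrow> V C (P(j := None)) x = x"
  shows "QFp C P z j \<le> z"
proof -
  have jN: "j < N" using valid_state_partial_lt[OF valid] j by blast
  have "V C (P(j := None)) (max z v) = max z v" for v
    using stop by simp
  then show ?thesis
    unfolding QFpartial_def using box_law.sigmaFcond_le[OF box_law[OF jN] cF_pos[OF jN] p] sigma j
    by simp
qed

lemma QPclosed_le_stop: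
  assumes valid: "valid_state C P" and j: "j \<in> C" and sigma: "sigmaP (M j) (cF j) (cP j) \<le> z"
    and stop: "\<And>x. z \<le> x \<Longrightarrow> V (C - {j}) P x = x"
  shows "QP C P z j \<le> z"
proof -
  have jN: "j < N" using valid_state_closed_lt[OF valid j] .
  interpret J: box_law "M j" by (rule box_law[OF jN])
  let ?gain = "\<lambda>s. max 0 (- cF j + condE (M j) s (\<lambda>v. max 0 (v - z)))"
  have "j \<notin> dom P" using valid j by (auto simp: valid_state_def)
  then have P_j: "P(j := None) = P" by (simp add: domIff fun_upd_idem)
  \<comment> \<open>After observing type \<open>s\<close>, the capped bound for box \<open>j\<close> itself limits the continuation.\<close>
  have "V (C - {j}) (P(j \<mapsto> s)) z * type_prob (M j) s \<le> (z + ?gain s) * type_prob (M j) s" for s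
  proof (cases "type_prob (M j) s = 0")
    case False
    then have p: "0 < type_prob (M j) s" using type_prob_nonneg[of "M j" s] by linarith
    define \<sigma> where "\<sigma> = sigmaFcond (M j) (cF j) s"
    have sigma_eq: "condE (M j) s (\<lambda>v. max 0 (v - \<sigma>)) = cF j"
      unfolding \<sigma>_def by (rule J.sigmaFcond_eq[OF cF_pos[OF jN] p])
    interpret capped_box N M cF cP j s \<sigma>
      by (intro capped_box.intro capped_box_axioms.intro pandora_axioms jN p sigma_eq)
    have "V (C - {j}) (P(j \<mapsto> s)) z \<le> capped (C - {j}) (P(j \<mapsto> s)) z"
      using valid j by (intro optval_le_capped valid_state_P_open) auto
    also have "\<dots> = condE (M j) s (\<lambda>v. max z (min v \<sigma>))"
      unfolding capped_def using stop P_j by simp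
    also have "\<dots> = z + ?gain s"
      by (rule J.condE_max_min[OF p sigma_eq])
    finally show ?thesis by (rule mult_right_mono) simp
  qed simp
  then have "QP C P z j \<le> - cP j + (\<Sum>s\<in>UNIV. (z + ?gain s) * type_prob (M j) s)"
    unfolding QPclosed_def J.integral_type_fun[of "\<lambda>s. V (C - {j}) (P(j \<mapsto> s)) z"]
    by (simp add: sum_mono)
  also have "\<dots> = - cP j + z + J.partial_gain (cF j) z"
    unfolding J.partial_gain_def J.integral_type_fun[of ?gain]
    by (simp add: distrib_right sum.distrib sum_distrib_left[symmetric] J.sum_type_prob)
  also have "\<dots> \<le> z"
    using J.partial_gain_le[OF cF_pos[OF jN] cP_pos[OF jN] sigma] by simp
  finally show ?thesis .
qed

lemma thresholds_below_mono:
  "thresholds_below C P z \<Longrightarrow> z \<le> x \<Longrightarrow> C' \<subseteq> C \<Longrightarrow> P' \<subseteq>\<^sub>m P \<Longrightarrow> thresholds_below C' P' x"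
  unfolding thresholds_below_def map_le_def by (metis (no_types, lifting) domIff dual_order.trans subsetD)

lemma thresholds_below_max_threshold:
  assumes "finite C" "finite (dom P)"
  shows "thresholds_below C P (max_threshold M cF cP C P)"
proof -
  let ?T = "(\<lambda>j. sigmaF (M j) (cF j)) ` C \<union> (\<lambda>j. sigmaP (M j) (cF j) (cP j)) ` C
      \<union> (\<lambda>j. sigmaFcond (M j) (cF j) (the (P j))) ` dom P"
  have le: "x \<le> Max ?T" if "x \<in> ?T" for x
    using assms that by (intro Max_ge) auto
  show ?thesis
    unfolding thresholds_below_def max_threshold_def
  proof (intro conjI ballI)
    fix j
    assume "j \<in> C"
    then show "sigmaF (M j) (cF j) \<le> Max ?T" "sigmaP (M j) (cF j) (cP j) \<le> Max ?T"
      by (auto intro!: le)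
  next
    fix j
    assume "j \<in> dom P"
    then show "sigmaFcond (M j) (cF j) (the (P j)) \<le> Max ?T"
      by (auto intro!: le)
  qed
qed

theorem optval_eq_stop:
  "valid_state C P \<Longrightarrow> positive_types P \<Longrightarrow> thresholds_below C P z \<Longrightarrow> V C P z = z"
proof (induction "state_size C P" arbitrary: C P z rule: less_induct)
  case less
  note valid = less.prems(1) and pos = less.prems(2) and below = less.prems(3)
  note fin = valid_state_finite[OF valid]
  have "V C P z \<le> z"
  proof (rule optval_le[OF valid order.refl])
    fix j
    assume j: "j \<in> C"
    have stop: "V (C - {j}) P x = x" if "z \<le> x" for x
      using less fin j that
      by (intro less.hyps state_size_F_open valid_state_F_open thresholds_below_mono[OF below]) auto
    show "QF C P z j \<le> z"
      using below j by (intro QFclosed_le_stop[OF valid j _ stop]) (auto simp: thresholds_below_def)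
    show "QP C P z j \<le> z"
      using below j by (intro QPclosed_le_stop[OF valid j _ stop]) (auto simp: thresholds_below_def)
  next
    fix j
    assume j: "j \<in> dom P"
    then obtain s where s: "P j = Some s" by auto
    have stop: "V C (P(j := None)) x = x" if "z \<le> x" for x
      using less fin j that
      by (intro less.hyps state_size_F_open_partial valid_state_F_open_partial
          thresholds_below_mono[OF below]) (auto simp: positive_types_def map_le_def)
    have "sigmaFcond (M j) (cF j) (the (P j)) \<le> z"
      using below j by (simp add: thresholds_below_def)
    then show "QFp C P z j \<le> z"
      using pos s by (intro QFpartial_le_stop[OF valid s _ _ stop]) (auto simp: positive_types_def)
  qed
  then show ?case using stop_le_optval[OF valid, of z] by simp
qed

theorem optval_eq_QFpartial:
  assumes valid: "valid_state C P" and pos: "positive_types P"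
    and no_stop: "y < V C P y" and k: "P k = Some tk"
    and k_max: "sigmaFcond (M k) (cF k) tk = max_threshold M cF cP C P"
  shows "V C P y = QFp C P y k"
proof -
  let ?\<sigma> = "sigmaFcond (M k) (cF k) tk"
  have kN: "k < N" using valid_state_partial_lt[OF valid] k by blast
  have p: "0 < type_prob (M k) tk" using pos k by (simp add: positive_types_def)
  interpret capped_box N M cF cP k tk ?\<sigma>
    by (intro capped_box.intro capped_box_axioms.intro pandora_axioms kN p
        box_law.sigmaFcond_eq[OF box_law[OF kN] cF_pos[OF kN]])
  have stop: "V C (P(k := None)) w = w" if "?\<sigma> \<le> w" for w
  proof (rule optval_eq_stop)
    show "valid_state C (P(k := None))"
      using valid by (rule valid_state_F_open_partial)
    show "positive_types (P(k := None))"
      using pos by (simp add: positive_types_def)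
    have "P(k := None) \<subseteq>\<^sub>m P" by (simp add: map_le_def)
    then show "thresholds_below C (P(k := None)) w"
      using thresholds_below_mono[OF thresholds_below_max_threshold[OF valid_state_finite[OF valid]]]
        k_max that by simp
  qed
  have le: "V C P y \<le> capped C P y"
    using valid k by (rule optval_le_capped)
  have "y < ?\<sigma>"
  proof (rule ccontr)
    assume "\<not> y < ?\<sigma>"
    then have "capped C P y = y" by (intro capped_eq_stop stop) auto
    then show False using le no_stop by simp
  qed
  then have "QFp C P y k = capped C P y"
    using k stop valid by (intro QFpartial_k_eq_capped)
  moreover have "QFp C P y k \<le> V C P y"
    using k by (intro QFpartial_le_optval[OF valid]) auto
  ultimately show ?thesis
    using le by simp
qed

end

theorem mainTheorem1:
  fixes N :: nat
    and M :: "nat \<Rightarrow> (real \<times> 't::finite) measure"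
    and cF cP :: "nat \<Rightarrow> real"
    and C :: "nat set" and P :: "nat \<rightharpoonup> 't" and y :: real and k :: nat
  assumes boxes: "\<And>i. i < N \<Longrightarrow> prob_space (M i)"
    and sets_M: "\<And>i. i < N \<Longrightarrow> sets (M i) = sets (borel \<Otimes>\<^sub>M count_space UNIV)"
    and integrable_V: "\<And>i. i < N \<Longrightarrow> integrable (M i) fst"
    and nonneg_V: "\<And>i. i < N \<Longrightarrow> (AE \<omega> in M i. 0 \<le> fst \<omega>)"
    and cF_pos: "\<And>i. i < N \<Longrightarrow> 0 < cF i"
    and cP_pos: "\<And>i. i < N \<Longrightarrow> 0 < cP i"
    and C_sub: "C \<subseteq> {..<N}"
    and P_sub: "dom P \<subseteq> {..<N}"
    and disj: "C \<inter> dom P = {}"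
    and types_pos: "\<And>j t. P j = Some t \<Longrightarrow> 0 < measure (M j) {\<omega> \<in> space (M j). snd \<omega> = t}"
    and no_stop: "y < optval M cF cP C P y"
    and k_in: "P k = Some tk"
    and k_max: "sigmaFcond (M k) (cF k) tk = max_threshold M cF cP C P"
  shows "optval M cF cP C P y = QFpartial M cF cP C P y k"
proof -
  interpret pandora N M cF cP
    using boxes sets_M integrable_V cF_pos cP_pos
    by (intro pandora.intro box_law.intro box_law_axioms.intro)
  show ?thesis
  proof (rule optval_eq_QFpartial[OF _ _ no_stop k_in k_max])
    show "valid_state C P"
      using C_sub P_sub disj by (simp add: valid_state_def)
    show "positive_types P"
      using types_pos by (simp add: positive_types_def type_prob_def)
  qed
qed

end
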